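(* The functor $\mathrm{Ab}_{\mathrm{sT}}: \mathrm{sTCom} \to \mathrm{sAbGrp}$ is left adjoint to the functor $\mathrm{U}_{\mathrm{sT}}: \mathrm{sAbGrp} \to \mathrm{sTCom}$.
   Context: A simplicial $T$-complex is a simplicial set $X$ together with a set of marked ("thin") simplices such that: (1) every degenerate simplex is thin; (2) every horn $h:\Lambda^n_k \to X$ has a unique filler $\Delta^n \to X$ whose nondegenerate $n$-simplex is thin, denoted $\mathrm{fill}(h)$; (3) if all nondegenerate $(n-1)$-simplices of a horn $h:\Lambda^n_k\to X$ are thin, then the $k$th face of $\mathrm{fill}(h)$ is thin. Maps of simplicial $T$-complexes are simplicial maps sending thin simplices to thin simplices; the resulting category is $\mathrm{sTCom}$. $\mathrm{sAbGrp}$ denotes the category of simplicial abelian groups. The functor $\mathrm{U}_{\mathrm{sT}}: \mathrm{sAbGrp}\to\mathrm{sTCom}$ sends a simplicial abelian group $A$ to the simplicial $T$-complex whose underlying simplicial set is that of $A$ and whose thin simplices are the sums of degenerate simplices (this is a simplicial $T$-complex by a result of Ashley). The functor $\mathrm{Ab}_{\mathrm{sT}}:\mathrm{sTCom}\to\mathrm{sAbGrp}$ sends a simplicial $T$-complex $X$, with underlying simplicial set $|X|$ and natural map $\eta: |X| \to \mathbb{Z}[|X|]$, to the quotient $$\mathrm{Ab}_{\mathrm{sT}}(X) = \mathbb{Z}[X]\big/\langle \mathrm{fill}(\eta\circ h) - \eta\circ \mathrm{fill}(h) \mid h:\Lambda^n_k \to |X| \rangle,$$ where $\mathrm{fill}$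 denotes the unique thin filler of a horn (in $X$, respectively in $\mathrm{U}_{\mathrm{sT}}(\mathbb{Z}[X])$). *)

theory Defs
  imports "HOL-Algebra.Coset"
begin

text \<open>sd X n i : X_n -> X_(n-1) is the i-th face map (n >= 1, i <= n);
  ss X n i : X_n -> X_(n+1) is the i-th degeneracy map (i <= n).\<close>

record 'a sset =
  sS :: "nat \<Rightarrow> 'a set"
  sd :: "nat \<Rightarrow> nat \<Rightarrow> 'a \<Rightarrow> 'a"
  ss :: "nat \<Rightarrow> nat \<Rightarrow> 'a \<Rightarrow> 'a"

record 'a stcx = "'a sset" +
  sthin :: "nat \<Rightarrow> 'a set"

record 'a sab = "'a sset" +
  sgrp :: "nat \<Rightarrow> 'a monoid"

definition simplicial :: "('a, 'z) sset_scheme \<Rightarrow> bool" where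
  "simplicial X \<longleftrightarrow>
    (\<forall>n i x. x \<in> sS X (Suc n) \<and> i \<le> Suc n \<longrightarrow> sd X (Suc n) i x \<in> sS X n) \<and>
    (\<forall>n i x. x \<in> sS X n \<and> i \<le> n \<longrightarrow> ss X n i x \<in> sS X (Suc n)) \<and>
    (\<forall>n i j x. x \<in> sS X (Suc (Suc n)) \<and> i < j \<and> j \<le> Suc (Suc n) \<longrightarrow>
        sd X (Suc n) i (sd X (Suc (Suc n)) j x) = sd X (Suc n) (j - 1) (sd X (Suc (Suc n)) i x)) \<and>
    (\<forall>n i j x. x \<in> sS X (Suc n) \<and> i < j \<and> j \<le> Suc n \<longrightarrow>
        sd X (Suc (Suc n)) i (ss X (Suc n) j x) = ss X n (j - 1) (sd X (Suc n) i x)) \<and>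
    (\<forall>n j x. x \<in> sS X n \<and> j \<le> n \<longrightarrow>
        sd X (Suc n) j (ss X n j x) = x \<and> sd X (Suc n) (Suc j) (ss X n j x) = x) \<and>
    (\<forall>n i j x. x \<in> sS X (Suc n) \<and> Suc j < i \<and> i \<le> Suc (Suc n) \<longrightarrow>
        sd X (Suc (Suc n)) i (ss X (Suc n) j x) = ss X n j (sd X (Suc n) (i - 1) x)) \<and>
    (\<forall>n i j x. x \<in> sS X n \<and> i \<le> j \<and> j \<le> n \<longrightarrow>
        ss X (Suc n) i (ss X n j x) = ss X (Suc n) (Suc j) (ss X n i x))"

definition degenerate :: "('a, 'z) sset_scheme \<Rightarrow> nat \<Rightarrow> 'a \<Rightarrow> bool" where
  "degenerate X n x \<longleftrightarrow> (\<exists>m y i. n = Suc m \<and> y \<in> sS X m \<and> i \<le> m \<and> x = ss X m i y)"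

text \<open>A horn Lambda^(n+1)_k -> X, given by its compatible family of faces h i
  (i \<le> n+1, i \<noteq> k), each an n-simplex.\<close>

definition horn :: "('a, 'z) sset_scheme \<Rightarrow> nat \<Rightarrow> nat \<Rightarrow> (nat \<Rightarrow> 'a) \<Rightarrow> bool" where
  "horn X n k h \<longleftrightarrow> k \<le> Suc n \<and>
     (\<forall>i \<le> Suc n. i \<noteq> k \<longrightarrow> h i \<in> sS X n) \<and>
     (\<forall>i j. 0 < n \<and> i < j \<and> j \<le> Suc n \<and> i \<noteq> k \<and> j \<noteq> k \<longrightarrow>
        sd X n i (h j) = sd X n (j - 1) (h i))"

definition filler :: "('a, 'z) sset_scheme \<Rightarrow> nat \<Rightarrow> nat \<Rightarrow> (nat \<Rightarrow> 'a) \<Rightarrow> 'a \<Rightarrow> bool" where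
  "filler X n k h x \<longleftrightarrow> x \<in> sS X (Suc n) \<and> (\<forall>i \<le> Suc n. i \<noteq> k \<longrightarrow> sd X (Suc n) i x = h i)"

definition sTcomplex :: "('a, 'z) stcx_scheme \<Rightarrow> bool" where
  "sTcomplex X \<longleftrightarrow> simplicial X \<and>
     (\<forall>n. sthin X n \<subseteq> sS X n) \<and> sthin X 0 = {} \<and>
     (\<forall>n x. degenerate X n x \<longrightarrow> x \<in> sthin X n) \<and>
     (\<forall>n k h. horn X n k h \<longrightarrow> (\<exists>!x. filler X n k h x \<and> x \<in> sthin X (Suc n))) \<and>
     (\<forall>n k h x. horn X n k h \<and> (\<forall>i \<le> Suc n. i \<noteq> k \<longrightarrow> h i \<in> sthin X n) \<and>
        filler X n k h x \<and> x \<in> sthin X (Suc n) \<longrightarrow> sd X (Suc n) k x \<in> sthin X n)"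

definition fill :: "('a, 'z) stcx_scheme \<Rightarrow> nat \<Rightarrow> nat \<Rightarrow> (nat \<Rightarrow> 'a) \<Rightarrow> 'a" where
  "fill X n k h = (THE x. filler X n k h x \<and> x \<in> sthin X (Suc n))"

definition sAbGrp :: "'a sab \<Rightarrow> bool" where
  "sAbGrp A \<longleftrightarrow> simplicial A \<and>
     (\<forall>n. comm_group (sgrp A n) \<and> carrier (sgrp A n) = sS A n) \<and>
     (\<forall>n i. i \<le> Suc n \<longrightarrow> sd A (Suc n) i \<in> hom (sgrp A (Suc n)) (sgrp A n)) \<and>
     (\<forall>n i. i \<le> n \<longrightarrow> ss A n i \<in> hom (sgrp A n) (sgrp A (Suc n)))"

definition ssmap :: "('a, 'z) sset_scheme \<Rightarrow> ('b, 'w) sset_scheme \<Rightarrow> (nat \<Rightarrow> 'a \<Rightarrow> 'b) \<Rightarrow> bool" where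
  "ssmap X Y f \<longleftrightarrow>
     (\<forall>n x. x \<in> sS X n \<longrightarrow> f n x \<in> sS Y n) \<and>
     (\<forall>n i x. x \<in> sS X (Suc n) \<and> i \<le> Suc n \<longrightarrow> f n (sd X (Suc n) i x) = sd Y (Suc n) i (f (Suc n) x)) \<and>
     (\<forall>n i x. x \<in> sS X n \<and> i \<le> n \<longrightarrow> f (Suc n) (ss X n i x) = ss Y n i (f n x))"

definition sTmap :: "('a, 'z) stcx_scheme \<Rightarrow> ('b, 'w) stcx_scheme \<Rightarrow> (nat \<Rightarrow> 'a \<Rightarrow> 'b) \<Rightarrow> bool" where
  "sTmap X Y f \<longleftrightarrow> ssmap X Y f \<and> (\<forall>n x. x \<in> sthin X n \<longrightarrow> f n x \<in> sthin Y n)"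

definition sAbhom :: "'a sab \<Rightarrow> 'b sab \<Rightarrow> (nat \<Rightarrow> 'a \<Rightarrow> 'b) \<Rightarrow> bool" where
  "sAbhom A B g \<longleftrightarrow> ssmap A B g \<and> (\<forall>n. g n \<in> hom (sgrp A n) (sgrp B n))"

definition UsT :: "'a sab \<Rightarrow> 'a stcx" where
  "UsT A = \<lparr> sS = sS A, sd = sd A, ss = ss A,
     sthin = (\<lambda>n. if n = 0 then {} else
        {x. \<exists>xs. set xs \<subseteq> {y. degenerate A n y} \<and>
               x = foldr (\<lambda>a b. a \<otimes>\<^bsub>sgrp A n\<^esub> b) xs \<one>\<^bsub>sgrp A n\<^esub>}) \<rparr>"

definition zcarrier :: "('a, 'z) sset_scheme \<Rightarrow> nat \<Rightarrow> ('a \<Rightarrow> int) set" where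
  "zcarrier X n = {f. finite {x. f x \<noteq> 0} \<and> (\<forall>x. f x \<noteq> 0 \<longrightarrow> x \<in> sS X n)}"

definition zpush :: "('a \<Rightarrow> 'b) \<Rightarrow> ('a \<Rightarrow> int) \<Rightarrow> ('b \<Rightarrow> int)" where
  "zpush \<phi> f = (\<lambda>y. \<Sum>x \<in> {x. f x \<noteq> 0 \<and> \<phi> x = y}. f x)"

definition zgrp :: "('a, 'z) sset_scheme \<Rightarrow> nat \<Rightarrow> ('a \<Rightarrow> int) monoid" where
  "zgrp X n = \<lparr> carrier = zcarrier X n, mult = (\<lambda>f g x. f x + g x), one = (\<lambda>x. 0) \<rparr>"

definition ZZ :: "('a, 'z) sset_scheme \<Rightarrow> ('a \<Rightarrow> int) sab" where
  "ZZ X = \<lparr> sS = zcarrier X, sd = (\<lambda>n i. zpush (sd X n i)), ss = (\<lambda>n i. zpush (ss X n i)),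
            sgrp = zgrp X \<rparr>"

definition etaZ :: "'a \<Rightarrow> ('a \<Rightarrow> int)" where
  "etaZ x = (\<lambda>y. if y = x then 1 else 0)"

inductive_set relgen :: "'a stcx \<Rightarrow> (nat \<times> ('a \<Rightarrow> int)) set" for X :: "'a stcx" where
  gen: "horn X n k h \<Longrightarrow>
     (Suc n, \<lambda>y. fill (UsT (ZZ X)) n k (\<lambda>i. etaZ (h i)) y - etaZ (fill X n k h) y) \<in> relgen X"
| zero: "(n, \<lambda>y. 0) \<in> relgen X"
| add: "(n, f) \<in> relgen X \<Longrightarrow> (n, g) \<in> relgen X \<Longrightarrow> (n, \<lambda>y. f y + g y) \<in> relgen X"
| neg: "(n, f) \<in> relgen X \<Longrightarrow> (n, \<lambda>y. - f y) \<in> relgen X"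
| face: "(Suc n, f) \<in> relgen X \<Longrightarrow> i \<le> Suc n \<Longrightarrow> (n, zpush (sd X (Suc n) i) f) \<in> relgen X"
| degen: "(n, f) \<in> relgen X \<Longrightarrow> i \<le> n \<Longrightarrow> (Suc n, zpush (ss X n i) f) \<in> relgen X"

definition relN :: "'a stcx \<Rightarrow> nat \<Rightarrow> ('a \<Rightarrow> int) set" where
  "relN X n = {f. (n, f) \<in> relgen X}"

definition AbST :: "'a stcx \<Rightarrow> ('a \<Rightarrow> int) set sab" where
  "AbST X = \<lparr> sS = (\<lambda>n. rcosets\<^bsub>zgrp X n\<^esub> (relN X n)),
     sd = (\<lambda>n i C. r_coset (zgrp X (n - 1)) (relN X (n - 1)) (zpush (sd X n i) (SOME f. f \<in> C))),
     ss = (\<lambda>n i C. r_coset (zgrp X (Suc n)) (relN X (Suc n)) (zpush (ss X n i) (SOME f. f \<in> C))),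
     sgrp = (\<lambda>n. zgrp X n Mod relN X n) \<rparr>"

definition unitAb :: "'a stcx \<Rightarrow> nat \<Rightarrow> 'a \<Rightarrow> ('a \<Rightarrow> int) set" where
  "unitAb X n x = r_coset (zgrp X n) (relN X n) (etaZ x)"

end

theory Submission
  imports Defs "HOL-Algebra.FiniteProduct"
begin

text \<open>A simplicial map \<open>f : X \<rightarrow> U\<^sub>s\<^sub>T(A)\<close> extends levelwise to the homomorphism
  \<open>\<Sum> c\<^sub>x x \<mapsto> \<Sum> c\<^sub>x f(x)\<close> out of the free group \<open>\<int>[X]\<close>; it is again simplicial, since two
  homomorphisms out of \<open>\<int>[X]\<close> agreeing on generators are equal.  It kills each generating
  relation \<open>fill(\<eta> \<circ> h) - \<eta>(fill h)\<close>, because both terms are sent to thin fillers of the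
  horn \<open>f \<circ> h\<close> in \<open>A\<close>, and thin fillers in a simplicial abelian group are unique: a sum of
  degenerate simplices whose faces other than the \<open>k\<close>-th vanish is fixed by the Moore-type
  projection \<open>\<Prod>(1 - s d)\<close>, which kills degenerate simplices, so it is zero.  (Existence of
  thin fillers, needed for \<open>fill(\<eta> \<circ> h)\<close> to make sense, follows by correcting the faces of
  a simplex one at a time with degenerate simplices.)  Hence the extension factors through
  \<open>Ab\<^sub>s\<^sub>T(X)\<close>, uniquely since \<open>\<int>[X] \<rightarrow> Ab\<^sub>s\<^sub>T(X)\<close> is onto.  The unit is a T-map because
  a thin simplex \<open>x\<close> is the thin filler of the horn formed by its own faces, so \<open>\<eta> x\<close> is
  identified with the sum of degenerate simplices \<open>fill(\<eta> \<circ> h)\<close>.\<close>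

lemma
  assumes "simplicial X"
  shows simplicial_face_closed:
      "x \<in> sS X (Suc n) \<Longrightarrow> i \<le> Suc n \<Longrightarrow> sd X (Suc n) i x \<in> sS X n"
    and simplicial_degen_closed:
      "x \<in> sS X n \<Longrightarrow> i \<le> n \<Longrightarrow> ss X n i x \<in> sS X (Suc n)"
    and simplicial_face_face:
      "x \<in> sS X (Suc (Suc n)) \<Longrightarrow> i < j \<Longrightarrow> j \<le> Suc (Suc n) \<Longrightarrow>
        sd X (Suc n) i (sd X (Suc (Suc n)) j x) = sd X (Suc n) (j - 1) (sd X (Suc (Suc n)) i x)"
    and simplicial_face_degen_less:
      "x \<in> sS X (Suc n) \<Longrightarrow> i < j \<Longrightarrow> j \<le> Suc n \<Longrightarrow>
        sd X (Suc (Suc n)) i (ss X (Suc n) j x) = ss X n (j - 1) (sd X (Suc n) i x)"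
    and simplicial_face_degen_same:
      "x \<in> sS X n \<Longrightarrow> j \<le> n \<Longrightarrow> sd X (Suc n) j (ss X n j x) = x"
    and simplicial_face_Suc_degen:
      "x \<in> sS X n \<Longrightarrow> j \<le> n \<Longrightarrow> sd X (Suc n) (Suc j) (ss X n j x) = x"
    and simplicial_face_degen_greater:
      "x \<in> sS X (Suc n) \<Longrightarrow> Suc j < i \<Longrightarrow> i \<le> Suc (Suc n) \<Longrightarrow>
        sd X (Suc (Suc n)) i (ss X (Suc n) j x) = ss X n j (sd X (Suc n) (i - 1) x)"
    and simplicial_degen_degen:
      "x \<in> sS X n \<Longrightarrow> i \<le> j \<Longrightarrow> j \<le> n \<Longrightarrow>
        ss X (Suc n) i (ss X n j x) = ss X (Suc n) (Suc j) (ss X n i x)"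
  using assms unfolding simplicial_def by auto

section \<open>Simplicial abelian groups and their thin simplices\<close>

definition degenerate_sums :: "'a sab \<Rightarrow> nat \<Rightarrow> 'a set" where
  "degenerate_sums A n = {x. \<exists>xs. set xs \<subseteq> {y. degenerate A n y} \<and>
     x = foldr (\<lambda>a b. a \<otimes>\<^bsub>sgrp A n\<^esub> b) xs \<one>\<^bsub>sgrp A n\<^esub>}"

lemma UsT_simps [simp]: "sS (UsT A) = sS A" "sd (UsT A) = sd A" "ss (UsT A) = ss A"
  by (simp_all add: UsT_def)

lemma sthin_UsT: "sthin (UsT A) n = (if n = 0 then {} else degenerate_sums A n)"
  by (simp add: UsT_def degenerate_sums_def)

lemma filler_UsT [simp]: "filler (UsT A) = filler A"
  by (simp add: filler_def fun_eq_iff)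

lemma hom_foldr_mult:
  assumes h: "h \<in> hom G H" and "group G" "group H" and "set xs \<subseteq> carrier G"
  shows "h (foldr (\<lambda>a b. a \<otimes>\<^bsub>G\<^esub> b) xs \<one>\<^bsub>G\<^esub>) = foldr (\<lambda>a b. a \<otimes>\<^bsub>H\<^esub> b) (map h xs) \<one>\<^bsub>H\<^esub>"
proof -
  interpret G: group G by fact
  have closed: "foldr (\<lambda>a b. a \<otimes>\<^bsub>G\<^esub> b) ys \<one>\<^bsub>G\<^esub> \<in> carrier G" if "set ys \<subseteq> carrier G" for ys
    using that by (induction ys) auto
  show ?thesis
    using assms(4) by (induction xs) (auto simp: closed hom_mult[OF h] hom_one[OF assms(1-3)])
qed

locale simplicial_ab_group =
  fixes A :: "'a sab"
  assumes sAbGrp: "sAbGrp A"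
begin

sublocale G: comm_group "sgrp A n" for n
  using sAbGrp unfolding sAbGrp_def by blast

lemma carrier_sgrp [simp]: "carrier (sgrp A n) = sS A n"
  using sAbGrp unfolding sAbGrp_def by blast

lemmas sgrp_closed [simp] =
  G.one_closed[unfolded carrier_sgrp] G.m_closed[unfolded carrier_sgrp] G.inv_closed[unfolded carrier_sgrp]

lemma simplicial: "simplicial A"
  using sAbGrp unfolding sAbGrp_def by blast

lemmas face_closed = simplicial_face_closed[OF simplicial]
  and degen_closed = simplicial_degen_closed[OF simplicial]
  and face_face = simplicial_face_face[OF simplicial]
  and face_degen_less = simplicial_face_degen_less[OF simplicial]
  and face_degen_same = simplicial_face_degen_same[OF simplicial]
  and face_Suc_degen = simplicial_face_Suc_degen[OF simplicial]
  and face_degen_greater = simplicial_face_degen_greater[OF simplicial]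
  and degen_degen = simplicial_degen_degen[OF simplicial]

lemma face_hom: "i \<le> Suc n \<Longrightarrow> sd A (Suc n) i \<in> hom (sgrp A (Suc n)) (sgrp A n)"
  using sAbGrp unfolding sAbGrp_def by blast

lemma degen_hom: "i \<le> n \<Longrightarrow> ss A n i \<in> hom (sgrp A n) (sgrp A (Suc n))"
  using sAbGrp unfolding sAbGrp_def by blast

lemma face_group_hom: "i \<le> Suc n \<Longrightarrow> group_hom (sgrp A (Suc n)) (sgrp A n) (sd A (Suc n) i)"
  by (simp add: face_hom group_hom_axioms_def group_hom_def G.is_group)

lemma degen_group_hom: "i \<le> n \<Longrightarrow> group_hom (sgrp A n) (sgrp A (Suc n)) (ss A n i)"
  by (simp add: degen_hom group_hom_axioms_def group_hom_def G.is_group)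

lemma face_mult:
  "x \<in> sS A (Suc n) \<Longrightarrow> y \<in> sS A (Suc n) \<Longrightarrow> i \<le> Suc n \<Longrightarrow>
    sd A (Suc n) i (x \<otimes>\<^bsub>sgrp A (Suc n)\<^esub> y) = sd A (Suc n) i x \<otimes>\<^bsub>sgrp A n\<^esub> sd A (Suc n) i y"
  by (simp add: hom_mult[OF face_hom])

lemma face_inv:
  "x \<in> sS A (Suc n) \<Longrightarrow> i \<le> Suc n \<Longrightarrow>
    sd A (Suc n) i (inv\<^bsub>sgrp A (Suc n)\<^esub> x) = inv\<^bsub>sgrp A n\<^esub> sd A (Suc n) i x"
  by (simp add: group_hom.hom_inv[OF face_group_hom])

lemma face_one: "i \<le> Suc n \<Longrightarrow> sd A (Suc n) i \<one>\<^bsub>sgrp A (Suc n)\<^esub> = \<one>\<^bsub>sgrp A n\<^esub>"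
  by (simp add: group_hom.hom_one[OF face_group_hom])

lemma degen_mult:
  "x \<in> sS A n \<Longrightarrow> y \<in> sS A n \<Longrightarrow> i \<le> n \<Longrightarrow>
    ss A n i (x \<otimes>\<^bsub>sgrp A n\<^esub> y) = ss A n i x \<otimes>\<^bsub>sgrp A (Suc n)\<^esub> ss A n i y"
  by (simp add: hom_mult[OF degen_hom])

lemma degen_inv:
  "x \<in> sS A n \<Longrightarrow> i \<le> n \<Longrightarrow> ss A n i (inv\<^bsub>sgrp A n\<^esub> x) = inv\<^bsub>sgrp A (Suc n)\<^esub> ss A n i x"
  by (simp add: group_hom.hom_inv[OF degen_group_hom])

lemma degen_one: "i \<le> n \<Longrightarrow> ss A n i \<one>\<^bsub>sgrp A n\<^esub> = \<one>\<^bsub>sgrp A (Suc n)\<^esub>"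
  by (simp add: group_hom.hom_one[OF degen_group_hom])

lemma degenerate_closed: "degenerate A n y \<Longrightarrow> y \<in> sS A n"
  unfolding degenerate_def using degen_closed by blast

lemma foldr_mult_closed: "set xs \<subseteq> sS A n \<Longrightarrow> foldr (\<lambda>a b. a \<otimes>\<^bsub>sgrp A n\<^esub> b) xs \<one>\<^bsub>sgrp A n\<^esub> \<in> sS A n"
  by (induction xs) auto

lemma degenerate_sums_closed: "x \<in> degenerate_sums A n \<Longrightarrow> x \<in> sS A n"
  unfolding degenerate_sums_def using foldr_mult_closed degenerate_closed by blast

lemma one_degenerate_sums: "\<one>\<^bsub>sgrp A n\<^esub> \<in> degenerate_sums A n"
  unfolding degenerate_sums_def by (intro CollectI exI[of _ "[]"]) simp

lemma degen_degenerate_sums: "y \<in> sS A m \<Longrightarrow> i \<le> m \<Longrightarrow> ss A m i y \<in> degenerate_sums A (Suc m)"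
  unfolding degenerate_sums_def
  by (intro CollectI exI[of _ "[ss A m i y]"]) (auto simp: degenerate_def degen_closed)

lemma foldr_mult_append:
  "set xs \<subseteq> sS A n \<Longrightarrow> set ys \<subseteq> sS A n \<Longrightarrow>
    foldr (\<lambda>a b. a \<otimes>\<^bsub>sgrp A n\<^esub> b) (xs @ ys) \<one>\<^bsub>sgrp A n\<^esub> =
      foldr (\<lambda>a b. a \<otimes>\<^bsub>sgrp A n\<^esub> b) xs \<one>\<^bsub>sgrp A n\<^esub> \<otimes>\<^bsub>sgrp A n\<^esub>
      foldr (\<lambda>a b. a \<otimes>\<^bsub>sgrp A n\<^esub> b) ys \<one>\<^bsub>sgrp A n\<^esub>"
  by (induction xs) (auto simp: foldr_mult_closed G.m_assoc)

lemma foldr_mult_inv: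
  "set xs \<subseteq> sS A n \<Longrightarrow>
    inv\<^bsub>sgrp A n\<^esub> foldr (\<lambda>a b. a \<otimes>\<^bsub>sgrp A n\<^esub> b) xs \<one>\<^bsub>sgrp A n\<^esub> =
      foldr (\<lambda>a b. a \<otimes>\<^bsub>sgrp A n\<^esub> b) (map (\<lambda>y. inv\<^bsub>sgrp A n\<^esub> y) xs) \<one>\<^bsub>sgrp A n\<^esub>"
  by (induction xs) (auto simp: foldr_mult_closed G.inv_mult)

lemma mult_degenerate_sums:
  assumes "x \<in> degenerate_sums A n" "y \<in> degenerate_sums A n"
  shows "x \<otimes>\<^bsub>sgrp A n\<^esub> y \<in> degenerate_sums A n"
proof -
  obtain xs ys where xs: "set xs \<subseteq> {y. degenerate A n y}" "x = foldr (\<lambda>a b. a \<otimes>\<^bsub>sgrp A n\<^esub> b) xs \<one>\<^bsub>sgrp A n\<^esub>"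
    and ys: "set ys \<subseteq> {y. degenerate A n y}" "y = foldr (\<lambda>a b. a \<otimes>\<^bsub>sgrp A n\<^esub> b) ys \<one>\<^bsub>sgrp A n\<^esub>"
    using assms unfolding degenerate_sums_def by blast
  have "set xs \<subseteq> sS A n" "set ys \<subseteq> sS A n"
    using xs(1) ys(1) degenerate_closed by auto
  then have "x \<otimes>\<^bsub>sgrp A n\<^esub> y = foldr (\<lambda>a b. a \<otimes>\<^bsub>sgrp A n\<^esub> b) (xs @ ys) \<one>\<^bsub>sgrp A n\<^esub>"
    by (simp only: xs(2) ys(2) foldr_mult_append)
  then show ?thesis
    using xs(1) ys(1) unfolding degenerate_sums_def by (intro CollectI exI[of _ "xs @ ys"]) auto
qed

lemma inv_degenerate_sums:
  assumes "x \<in> degenerate_sums A n"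
  shows "inv\<^bsub>sgrp A n\<^esub> x \<in> degenerate_sums A n"
proof -
  obtain xs where xs: "set xs \<subseteq> {y. degenerate A n y}" "x = foldr (\<lambda>a b. a \<otimes>\<^bsub>sgrp A n\<^esub> b) xs \<one>\<^bsub>sgrp A n\<^esub>"
    using assms unfolding degenerate_sums_def by blast
  have "degenerate A n (inv\<^bsub>sgrp A n\<^esub> y)" if y: "degenerate A n y" for y
  proof -
    obtain m z i where "n = Suc m" "z \<in> sS A m" "i \<le> m" "y = ss A m i z"
      using y unfolding degenerate_def by blast
    then show ?thesis
      unfolding degenerate_def by (intro exI[of _ m] exI[of _ "inv\<^bsub>sgrp A m\<^esub> z"] exI[of _ i]) (simp add: degen_inv)
  qed
  moreover have "inv\<^bsub>sgrp A n\<^esub> x = foldr (\<lambda>a b. a \<otimes>\<^bsub>sgrp A n\<^esub> b) (map (\<lambda>y. inv\<^bsub>sgrp A n\<^esub> y) xs) \<one>\<^bsub>sgrp A n\<^esub>"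
    using xs(1) degenerate_closed unfolding xs(2) by (intro foldr_mult_inv) auto
  ultimately show ?thesis
    using xs(1) unfolding degenerate_sums_def
    by (intro CollectI exI[of _ "map (\<lambda>y. inv\<^bsub>sgrp A n\<^esub> y) xs"]) auto
qed

end

lemma sAbhom_degenerate_sums:
  assumes A: "sAbGrp A" and B: "sAbGrp B" and g: "sAbhom A B g"
    and x: "x \<in> degenerate_sums A n"
  shows "g n x \<in> degenerate_sums B n"
proof -
  interpret A: simplicial_ab_group A by (rule simplicial_ab_group.intro[OF A])
  interpret B: simplicial_ab_group B by (rule simplicial_ab_group.intro[OF B])
  have ss: "ssmap A B g" and hom: "g n \<in> hom (sgrp A n) (sgrp B n)"
    using g unfolding sAbhom_def by blast+
  obtain xs where xs: "set xs \<subseteq> {y. degenerate A n y}" "x = foldr (\<lambda>a b. a \<otimes>\<^bsub>sgrp A n\<^esub> b) xs \<one>\<^bsub>sgrp A n\<^esub>"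
    using x unfolding degenerate_sums_def by blast
  have "degenerate B n (g n y)" if "degenerate A n y" for y
    using that ss unfolding degenerate_def ssmap_def by fastforce
  moreover have "g n x = foldr (\<lambda>a b. a \<otimes>\<^bsub>sgrp B n\<^esub> b) (map (g n) xs) \<one>\<^bsub>sgrp B n\<^esub>"
    using xs A.degenerate_closed by (auto intro!: hom_foldr_mult[OF hom A.G.is_group B.G.is_group])
  ultimately show ?thesis
    using xs(1) unfolding degenerate_sums_def by (intro CollectI exI[of _ "map (g n) xs"]) auto
qed

section \<open>Thin fillers in simplicial abelian groups\<close>

lemma horn_le: "horn X n k h \<Longrightarrow> k \<le> Suc n"
  unfolding horn_def by blast

lemma horn_closed: "horn X n k h \<Longrightarrow> i \<le> Suc n \<Longrightarrow> i \<noteq> k \<Longrightarrow> h i \<in> sS X n"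
  unfolding horn_def by blast

lemma horn_compatible:
  "horn X n k h \<Longrightarrow> 0 < n \<Longrightarrow> i < j \<Longrightarrow> j \<le> Suc n \<Longrightarrow> i \<noteq> k \<Longrightarrow> j \<noteq> k \<Longrightarrow>
    sd X n i (h j) = sd X n (j - 1) (h i)"
  unfolding horn_def by blast

lemma (in comm_group) hom_mult_inv_hom:
  assumes \<phi>: "\<phi> \<in> hom G G"
  shows "(\<lambda>x. x \<otimes> inv \<phi> x) \<in> hom G G"
  by (rule homI) (simp_all add: hom_in_carrier[OF \<phi>] hom_mult[OF \<phi>] inv_mult m_ac)

definition face_proj :: "'a sab \<Rightarrow> nat \<Rightarrow> nat \<Rightarrow> nat \<Rightarrow> 'a \<Rightarrow> 'a" where
  "face_proj A n j r x = x \<otimes>\<^bsub>sgrp A (Suc n)\<^esub> inv\<^bsub>sgrp A (Suc n)\<^esub> ss A n j (sd A (Suc n) r x)"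

text \<open>The composite of the operators \<open>1 - s\<^sub>t d\<^sub>t\<close> for \<open>t < k\<close>, followed by
  \<open>1 - s\<^sub>r\<^sub>-\<^sub>1 d\<^sub>r\<close> for \<open>r = n + 1, \<dots>, k + 1\<close>.  After all \<open>n + 1\<close> steps it fixes
  every simplex whose faces other than the \<open>k\<close>-th vanish, and it kills every degenerate simplex.\<close>

primrec horn_proj :: "'a sab \<Rightarrow> nat \<Rightarrow> nat \<Rightarrow> nat \<Rightarrow> 'a \<Rightarrow> 'a" where
  "horn_proj A n k 0 = id"
| "horn_proj A n k (Suc t) =
     (if t < k then face_proj A n t t else face_proj A n (n + k - t) (Suc (n + k - t))) \<circ> horn_proj A n k t"

context simplicial_ab_group
begin

lemma horn_defect_face_below:
  assumes h: "horn A (Suc n) k h" and w: "w \<in> sS A (Suc (Suc n))"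
    and ir: "i < r" "r \<le> Suc (Suc n)" "i \<noteq> k" "r \<noteq> k"
    and wi: "sd A (Suc (Suc n)) i w = h i"
  shows "sd A (Suc n) i (h r \<otimes>\<^bsub>sgrp A (Suc n)\<^esub> inv\<^bsub>sgrp A (Suc n)\<^esub> sd A (Suc (Suc n)) r w) = \<one>\<^bsub>sgrp A n\<^esub>"
proof -
  have hi: "h i \<in> sS A (Suc n)" and hr: "h r \<in> sS A (Suc n)"
    using ir horn_closed[OF h] by auto
  have "sd A (Suc n) i (h r) = sd A (Suc n) (r - 1) (h i)"
    using ir horn_compatible[OF h] by simp
  moreover have "sd A (Suc n) i (sd A (Suc (Suc n)) r w) = sd A (Suc n) (r - 1) (h i)"
    using face_face[OF w ir(1,2)] wi by simp
  ultimately show ?thesis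
    using ir hi hr w by (simp add: face_mult face_inv face_closed)
qed

lemma horn_defect_face_above:
  assumes h: "horn A (Suc n) k h" and w: "w \<in> sS A (Suc (Suc n))"
    and ri: "r < i" "i \<le> Suc (Suc n)" "i \<noteq> k" "r \<noteq> k"
    and wi: "sd A (Suc (Suc n)) i w = h i"
  shows "sd A (Suc n) (i - 1) (h r \<otimes>\<^bsub>sgrp A (Suc n)\<^esub> inv\<^bsub>sgrp A (Suc n)\<^esub> sd A (Suc (Suc n)) r w) = \<one>\<^bsub>sgrp A n\<^esub>"
proof -
  have hi: "h i \<in> sS A (Suc n)" and hr: "h r \<in> sS A (Suc n)"
    using ri horn_closed[OF h] by auto
  have "sd A (Suc n) (i - 1) (h r) = sd A (Suc n) r (h i)"
    using ri horn_compatible[OF h] by simp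
  moreover have "sd A (Suc n) (i - 1) (sd A (Suc (Suc n)) r w) = sd A (Suc n) r (h i)"
    using face_face[OF w ri(1,2)] wi by simp
  ultimately show ?thesis
    using ri hi hr w by (simp add: face_mult face_inv face_closed)
qed

lemma horn_correction_face:
  assumes h: "horn A n k h" and w: "w \<in> sS A (Suc n)" and wi: "sd A (Suc n) i w = h i"
    and i: "i \<le> Suc n" "i \<noteq> k" "i < j \<or> Suc j < i"
    and r: "r \<le> Suc n" "r \<noteq> k" "r = j \<or> r = Suc j" "j \<le> n"
  shows "sd A (Suc n) i (ss A n j (h r \<otimes>\<^bsub>sgrp A n\<^esub> inv\<^bsub>sgrp A n\<^esub> sd A (Suc n) r w)) = \<one>\<^bsub>sgrp A n\<^esub>"
proof -
  obtain m where m: "n = Suc m"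
    using i r by (cases n) auto
  define z where "z = h r \<otimes>\<^bsub>sgrp A (Suc m)\<^esub> inv\<^bsub>sgrp A (Suc m)\<^esub> sd A (Suc (Suc m)) r w"
  have h': "horn A (Suc m) k h" and w': "w \<in> sS A (Suc (Suc m))" and z: "z \<in> sS A (Suc m)"
    using h w r m horn_closed[OF h] face_closed[OF w] by (auto simp: z_def)
  show ?thesis
  proof (cases "i < j")
    case True
    then have "sd A (Suc m) i z = \<one>\<^bsub>sgrp A m\<^esub>"
      using horn_defect_face_below[OF h' w', of i r] i r wi m unfolding z_def by auto
    then show ?thesis
      using True r m z face_degen_less[OF z, of i j] by (simp add: degen_one z_def)
  next
    case False
    then have "sd A (Suc m) (i - 1) z = \<one>\<^bsub>sgrp A m\<^esub>"
      using horn_defect_face_above[OF h' w', of r i] i r wi m unfolding z_def by auto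
    then show ?thesis
      using False i r m z face_degen_greater[OF z, of j i] by (simp add: degen_one z_def)
  qed
qed

text \<open>Correcting the \<open>r\<close>-th face of \<open>w\<close> by a degenerate simplex \<open>s\<^sub>j z\<close>, with \<open>j\<close> adjacent
  to \<open>r\<close>, leaves the faces in \<open>I\<close> intact as long as they lie away from \<open>j\<close>.\<close>

lemma horn_filler_step:
  assumes h: "horn A n k h" and w: "w \<in> degenerate_sums A (Suc n)"
    and agree: "\<forall>i\<in>I. sd A (Suc n) i w = h i"
    and I: "\<forall>i\<in>I. i \<le> Suc n \<and> i \<noteq> k \<and> (i < j \<or> Suc j < i)"
    and r: "r \<le> Suc n" "r \<noteq> k" "r = j \<or> r = Suc j" "j \<le> n"
  shows "\<exists>w' \<in> degenerate_sums A (Suc n). \<forall>i \<in> insert r I. sd A (Suc n) i w' = h i"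
proof -
  have wS: "w \<in> sS A (Suc n)" using w degenerate_sums_closed by blast
  define z where "z = h r \<otimes>\<^bsub>sgrp A n\<^esub> inv\<^bsub>sgrp A n\<^esub> sd A (Suc n) r w"
  have zS: "z \<in> sS A n"
    unfolding z_def using r horn_closed[OF h] face_closed[OF wS] by simp
  define w' where "w' = w \<otimes>\<^bsub>sgrp A (Suc n)\<^esub> ss A n j z"
  have "w' \<in> degenerate_sums A (Suc n)"
    unfolding w'_def using w zS r(4) by (simp add: mult_degenerate_sums degen_degenerate_sums)
  moreover have "sd A (Suc n) r w' = h r"
  proof -
    have "sd A (Suc n) r (ss A n j z) = z"
      using r(3,4) zS face_degen_same face_Suc_degen by auto
    then show ?thesis
      unfolding w'_def z_def using r wS zS horn_closed[OF h] face_closed[OF wS]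
      by (simp add: face_mult degen_closed G.m_lcomm)
  qed
  moreover have "sd A (Suc n) i w' = h i" if i: "i \<in> I" for i
  proof -
    have iI: "i \<le> Suc n" "i \<noteq> k" "i < j \<or> Suc j < i" using I i by auto
    then have "sd A (Suc n) i (ss A n j z) = \<one>\<^bsub>sgrp A n\<^esub>"
      unfolding z_def using horn_correction_face[OF h wS _ iI r] agree i by blast
    then show ?thesis
      unfolding w'_def using iI r wS zS agree i horn_closed[OF h iI(1,2)]
      by (simp add: face_mult degen_closed)
  qed
  ultimately show ?thesis by blast
qed

lemma horn_lower_faces:
  assumes h: "horn A n k h"
  shows "r \<le> k \<Longrightarrow> \<exists>w \<in> degenerate_sums A (Suc n). \<forall>i<r. sd A (Suc n) i w = h i"
proof (induction r)
  case 0
  then show ?case using one_degenerate_sums by blast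
next
  case (Suc r)
  then obtain w where "w \<in> degenerate_sums A (Suc n)" "\<forall>i\<in>{..<r}. sd A (Suc n) i w = h i"
    by auto
  moreover have "r \<le> n" using Suc.prems horn_le[OF h] by simp
  ultimately obtain w' where "w' \<in> degenerate_sums A (Suc n)" "\<forall>i\<in>insert r {..<r}. sd A (Suc n) i w' = h i"
    using horn_filler_step[OF h, of w "{..<r}" r r] Suc.prems by auto
  moreover have "insert r {..<r} = {..<Suc r}" by auto
  ultimately show ?case by auto
qed

lemma horn_upper_faces:
  assumes h: "horn A n k h"
  shows "q \<le> Suc n - k \<Longrightarrow> \<exists>w \<in> degenerate_sums A (Suc n).
           \<forall>i \<le> Suc n. i < k \<or> Suc n - q < i \<longrightarrow> sd A (Suc n) i w = h i"
proof (induction q)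
  case 0
  then show ?case using horn_lower_faces[OF h order_refl] by auto
next
  case (Suc q)
  define r where "r = Suc n - q"
  define I where "I = {i. i \<le> Suc n \<and> (i < k \<or> r < i)}"
  have r: "k < r" "r \<le> Suc n" using Suc.prems unfolding r_def by auto
  obtain w where w: "w \<in> degenerate_sums A (Suc n)"
    and "\<forall>i \<le> Suc n. i < k \<or> r < i \<longrightarrow> sd A (Suc n) i w = h i"
    using Suc.IH[OF Suc_leD[OF Suc.prems]] unfolding r_def by blast
  then have agree: "\<forall>i\<in>I. sd A (Suc n) i w = h i"
    unfolding I_def by blast
  have "\<forall>i\<in>I. i \<le> Suc n \<and> i \<noteq> k \<and> (i < r - 1 \<or> Suc (r - 1) < i)"
    using r unfolding I_def by auto
  moreover have "r \<noteq> k" "r = r - 1 \<or> r = Suc (r - 1)" "r - 1 \<le> n"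
    using r by auto
  ultimately obtain w' where "w' \<in> degenerate_sums A (Suc n)" "\<forall>i\<in>insert r I. sd A (Suc n) i w' = h i"
    using horn_filler_step[OF h w agree _ r(2)] by blast
  moreover have "i \<in> insert r I" if "i \<le> Suc n" "i < k \<or> Suc n - Suc q < i" for i
    using that unfolding I_def r_def by auto
  ultimately show ?case by blast
qed

lemma horn_thin_filler_exists:
  assumes h: "horn A n k h"
  shows "\<exists>w \<in> degenerate_sums A (Suc n). filler A n k h w"
proof -
  obtain w where "w \<in> degenerate_sums A (Suc n)" "\<forall>i \<le> Suc n. i < k \<or> k < i \<longrightarrow> sd A (Suc n) i w = h i"
    using horn_upper_faces[OF h, of "Suc n - k"] horn_le[OF h] by auto
  then show ?thesis
    unfolding filler_def using degenerate_sums_closed by (metis linorder_neqE_nat)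
qed

lemma face_proj_hom:
  assumes "j \<le> n" "r \<le> Suc n"
  shows "face_proj A n j r \<in> hom (sgrp A (Suc n)) (sgrp A (Suc n))"
proof -
  have "ss A n j \<circ> sd A (Suc n) r \<in> hom (sgrp A (Suc n)) (sgrp A (Suc n))"
    using assms by (intro hom_compose[OF face_hom degen_hom])
  from G.hom_mult_inv_hom[OF this] show ?thesis
    by (simp add: face_proj_def[abs_def])
qed

lemma face_proj_one: "j \<le> n \<Longrightarrow> r \<le> Suc n \<Longrightarrow> face_proj A n j r \<one>\<^bsub>sgrp A (Suc n)\<^esub> = \<one>\<^bsub>sgrp A (Suc n)\<^esub>"
  by (simp add: face_proj_def face_one degen_one)

lemma face_proj_fixes:
  "x \<in> sS A (Suc n) \<Longrightarrow> j \<le> n \<Longrightarrow> sd A (Suc n) r x = \<one>\<^bsub>sgrp A n\<^esub> \<Longrightarrow> face_proj A n j r x = x"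
  by (simp add: face_proj_def degen_one)

lemma face_proj_degen_same:
  "y \<in> sS A n \<Longrightarrow> j \<le> n \<Longrightarrow> r = j \<or> r = Suc j \<Longrightarrow> face_proj A n j r (ss A n j y) = \<one>\<^bsub>sgrp A (Suc n)\<^esub>"
  by (auto simp: face_proj_def face_degen_same face_Suc_degen degen_closed)

lemma face_proj_degen_below:
  assumes y: "y \<in> sS A (Suc n)" and "r < i" "i \<le> Suc n"
  shows "face_proj A (Suc n) r r (ss A (Suc n) i y) = ss A (Suc n) i (face_proj A n r r y)"
proof -
  have dy: "sd A (Suc n) r y \<in> sS A n" using assms face_closed[OF y] by simp
  have "ss A (Suc n) r (sd A (Suc (Suc n)) r (ss A (Suc n) i y)) = ss A (Suc n) i (ss A n r (sd A (Suc n) r y))"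
    using assms face_degen_less[OF y, of r i] degen_degen[OF dy, of r "i - 1"] by simp
  then show ?thesis
    using assms by (simp add: face_proj_def degen_mult degen_inv degen_closed face_closed)
qed

lemma face_proj_degen_above:
  assumes y: "y \<in> sS A (Suc n)" and "i < j" "j \<le> Suc n"
  shows "face_proj A (Suc n) j (Suc j) (ss A (Suc n) i y) = ss A (Suc n) i (face_proj A n (j - 1) j y)"
proof -
  have dy: "sd A (Suc n) j y \<in> sS A n" using assms face_closed[OF y] by simp
  have "ss A (Suc n) j (sd A (Suc (Suc n)) (Suc j) (ss A (Suc n) i y)) =
      ss A (Suc n) i (ss A n (j - 1) (sd A (Suc n) j y))"
    using assms face_degen_greater[OF y, of i "Suc j"] degen_degen[OF dy, of i "j - 1"] by simp
  then show ?thesis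
    using assms by (simp add: face_proj_def degen_mult degen_inv degen_closed face_closed)
qed

lemma horn_proj_hom:
  assumes "k \<le> Suc n"
  shows "horn_proj A n k t \<in> hom (sgrp A (Suc n)) (sgrp A (Suc n))"
proof (induction t)
  case 0
  show ?case by (auto intro: homI)
next
  case (Suc t)
  show ?case
    unfolding horn_proj.simps
    by (rule hom_compose[OF Suc.IH]) (use assms in \<open>auto intro: face_proj_hom\<close>)
qed

lemma horn_proj_fixes:
  assumes x: "x \<in> sS A (Suc n)" and k: "k \<le> Suc n"
    and faces: "\<forall>i \<le> Suc n. i \<noteq> k \<longrightarrow> sd A (Suc n) i x = \<one>\<^bsub>sgrp A n\<^esub>"
  shows "t \<le> Suc n \<Longrightarrow> horn_proj A n k t x = x"
  by (induction t) (use x k faces in \<open>auto simp: face_proj_fixes\<close>)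

lemma horn_proj_degen_before_kill:
  assumes y: "y \<in> sS A n" and i: "i \<le> n" and k: "k \<le> Suc n"
  shows "t \<le> (if i < k then i else n + k - i) \<Longrightarrow> \<exists>y' \<in> sS A n. horn_proj A n k t (ss A n i y) = ss A n i y'"
proof (induction t)
  case 0
  then show ?case using y by auto
next
  case (Suc t)
  then obtain y' where y': "y' \<in> sS A n" "horn_proj A n k t (ss A n i y) = ss A n i y'"
    by auto
  obtain m where m: "n = Suc m"
    using Suc.prems i by (cases n) (auto split: if_splits)
  show ?case
  proof (cases "t < k")
    case True
    then have "face_proj A n t t (ss A n i y') = ss A n i (face_proj A m t t y')"
      using face_proj_degen_below[of y' m t i] Suc.prems y' i m by (auto split: if_splits)
    moreover have "face_proj A m t t y' \<in> sS A n"
      using hom_in_carrier[OF face_proj_hom] Suc.prems y' i m True k by (auto split: if_splits)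
    ultimately show ?thesis using y' True by auto
  next
    case False
    then have "face_proj A n (n + k - t) (Suc (n + k - t)) (ss A n i y') =
        ss A n i (face_proj A m (n + k - t - 1) (n + k - t) y')"
      using face_proj_degen_above[of y' m i "n + k - t"] Suc.prems y' i m by (auto split: if_splits)
    moreover have "face_proj A m (n + k - t - 1) (n + k - t) y' \<in> sS A n"
      using hom_in_carrier[OF face_proj_hom] Suc.prems y' i m False k by (auto split: if_splits)
    ultimately show ?thesis using y' False by auto
  qed
qed

lemma horn_proj_degen:
  assumes y: "y \<in> sS A n" and i: "i \<le> n" and k: "k \<le> Suc n"
  shows "horn_proj A n k (Suc n) (ss A n i y) = \<one>\<^bsub>sgrp A (Suc n)\<^esub>"
proof -
  define t\<^sub>0 where "t\<^sub>0 = (if i < k then i else n + k - i)"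
  obtain y' where y': "y' \<in> sS A n" "horn_proj A n k t\<^sub>0 (ss A n i y) = ss A n i y'"
    using horn_proj_degen_before_kill[OF y i k] unfolding t\<^sub>0_def by blast
  have "horn_proj A n k (Suc t\<^sub>0) (ss A n i y) = \<one>\<^bsub>sgrp A (Suc n)\<^esub>"
    using y' i face_proj_degen_same[OF y'(1) i] unfolding t\<^sub>0_def by (auto split: if_splits)
  then have "horn_proj A n k (Suc t\<^sub>0 + d) (ss A n i y) = \<one>\<^bsub>sgrp A (Suc n)\<^esub>" for d
    by (induction d) (use k in \<open>auto simp: face_proj_one\<close>)
  moreover have "Suc t\<^sub>0 + (n - t\<^sub>0) = Suc n"
    using i unfolding t\<^sub>0_def by auto
  ultimately show ?thesis by metis
qed

lemma degenerate_sums_trivial_faces: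
  assumes x: "x \<in> degenerate_sums A (Suc n)" and k: "k \<le> Suc n"
    and faces: "\<forall>i \<le> Suc n. i \<noteq> k \<longrightarrow> sd A (Suc n) i x = \<one>\<^bsub>sgrp A n\<^esub>"
  shows "x = \<one>\<^bsub>sgrp A (Suc n)\<^esub>"
proof -
  obtain xs where xs: "set xs \<subseteq> {y. degenerate A (Suc n) y}"
    "x = foldr (\<lambda>a b. a \<otimes>\<^bsub>sgrp A (Suc n)\<^esub> b) xs \<one>\<^bsub>sgrp A (Suc n)\<^esub>"
    using x unfolding degenerate_sums_def by blast
  have kill: "horn_proj A n k (Suc n) y = \<one>\<^bsub>sgrp A (Suc n)\<^esub>" if "degenerate A (Suc n) y" for y
    using that k unfolding degenerate_def by (auto simp del: horn_proj.simps intro!: horn_proj_degen)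
  have "x = horn_proj A n k (Suc n) x"
    by (rule horn_proj_fixes[OF degenerate_sums_closed[OF x] k faces order_refl, symmetric])
  also have "\<dots> = foldr (\<lambda>a b. a \<otimes>\<^bsub>sgrp A (Suc n)\<^esub> b) (map (horn_proj A n k (Suc n)) xs) \<one>\<^bsub>sgrp A (Suc n)\<^esub>"
    unfolding xs(2) using xs(1) degenerate_closed
    by (intro hom_foldr_mult[OF horn_proj_hom[OF k] G.is_group G.is_group]) auto
  also have "\<dots> = \<one>\<^bsub>sgrp A (Suc n)\<^esub>"
    using xs(1) kill by (induction xs) auto
  finally show ?thesis .
qed

lemma horn_thin_filler_unique:
  assumes x: "filler A n k h x" "x \<in> degenerate_sums A (Suc n)"
    and y: "filler A n k h y" "y \<in> degenerate_sums A (Suc n)" and k: "k \<le> Suc n"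
  shows "x = y"
proof -
  have xS: "x \<in> sS A (Suc n)" and yS: "y \<in> sS A (Suc n)"
    using x y degenerate_sums_closed by auto
  have "sd A (Suc n) i (x \<otimes>\<^bsub>sgrp A (Suc n)\<^esub> inv\<^bsub>sgrp A (Suc n)\<^esub> y) = \<one>\<^bsub>sgrp A n\<^esub>"
    if i: "i \<le> Suc n" "i \<noteq> k" for i
  proof -
    have "sd A (Suc n) i x = sd A (Suc n) i y"
      using x(1) y(1) i unfolding filler_def by simp
    then show ?thesis
      using i xS yS by (simp add: face_mult face_inv face_closed)
  qed
  then have "x \<otimes>\<^bsub>sgrp A (Suc n)\<^esub> inv\<^bsub>sgrp A (Suc n)\<^esub> y = \<one>\<^bsub>sgrp A (Suc n)\<^esub>"
    using degenerate_sums_trivial_faces mult_degenerate_sums inv_degenerate_sums x(2) y(2) k by simp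
  then show ?thesis
    using xS yS by (simp add: G.inv_solve_right')
qed

lemma fill_UsT:
  assumes h: "horn A n k h"
  shows "filler A n k h (fill (UsT A) n k h) \<and> fill (UsT A) n k h \<in> degenerate_sums A (Suc n)"
proof -
  have "\<exists>!x. filler A n k h x \<and> x \<in> degenerate_sums A (Suc n)"
    using horn_thin_filler_exists[OF h] horn_thin_filler_unique horn_le[OF h] by blast
  from theI'[OF this] show ?thesis
    unfolding fill_def filler_UsT sthin_UsT by simp
qed

end

lemma ssmap_closed: "ssmap X Y f \<Longrightarrow> x \<in> sS X n \<Longrightarrow> f n x \<in> sS Y n"
  unfolding ssmap_def by blast

lemma ssmap_face:
  "ssmap X Y f \<Longrightarrow> x \<in> sS X (Suc n) \<Longrightarrow> i \<le> Suc n \<Longrightarrow> f n (sd X (Suc n) i x) = sd Y (Suc n) i (f (Suc n) x)"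
  unfolding ssmap_def by blast

lemma ssmap_degen:
  "ssmap X Y f \<Longrightarrow> x \<in> sS X n \<Longrightarrow> i \<le> n \<Longrightarrow> f (Suc n) (ss X n i x) = ss Y n i (f n x)"
  unfolding ssmap_def by blast

lemma ssmap_comp:
  assumes "simplicial X" "ssmap X Y f" "ssmap Y Z g"
  shows "ssmap X Z (\<lambda>n x. g n (f n x))"
  using assms unfolding ssmap_def
  by (auto simp: simplicial_face_closed simplicial_degen_closed)

lemma ssmap_horn:
  assumes f: "ssmap X Y f" and h: "horn X n k h"
  shows "horn Y n k (\<lambda>i. f n (h i))"
  unfolding horn_def
proof (intro conjI allI impI)
  show "k \<le> Suc n" using horn_le[OF h] .
  show "f n (h i) \<in> sS Y n" if "i \<le> Suc n" "i \<noteq> k" for i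
    using that horn_closed[OF h] ssmap_closed[OF f] by blast
  fix i j assume ij: "0 < n \<and> i < j \<and> j \<le> Suc n \<and> i \<noteq> k \<and> j \<noteq> k"
  then obtain m where m: "n = Suc m" by (cases n) auto
  have "h i \<in> sS X (Suc m)" "h j \<in> sS X (Suc m)"
    using ij m horn_closed[OF h] by auto
  then have "sd Y (Suc m) i (f (Suc m) (h j)) = f m (sd X (Suc m) (j - 1) (h i))"
    using ij m horn_compatible[OF h, of i j] ssmap_face[OF f, of "h j" m i] by simp
  also have "\<dots> = sd Y (Suc m) (j - 1) (f (Suc m) (h i))"
    using ij m by (intro ssmap_face[OF f \<open>h i \<in> sS X (Suc m)\<close>]) auto
  finally show "sd Y n i (f n (h j)) = sd Y n (j - 1) (f n (h i))"
    using m by simp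
qed

lemma ssmap_filler:
  assumes f: "ssmap X Y f" and x: "filler X n k h x"
  shows "filler Y n k (\<lambda>i. f n (h i)) (f (Suc n) x)"
proof -
  have "x \<in> sS X (Suc n)" "\<forall>i \<le> Suc n. i \<noteq> k \<longrightarrow> sd X (Suc n) i x = h i"
    using x unfolding filler_def by auto
  then show ?thesis
    unfolding filler_def by (auto simp: ssmap_closed[OF f] ssmap_face[OF f, symmetric])
qed

lemma simplicial_surjective_image:
  assumes Y: "simplicial Y" and q: "ssmap Y Z q" and surj: "\<And>n. sS Z n \<subseteq> q n ` sS Y n"
  shows "simplicial Z"
  unfolding simplicial_def
proof (intro conjI allI impI)
  have preimage: "\<exists>y \<in> sS Y n. x = q n y" if "x \<in> sS Z n" for x n
    using that surj by blast
  note closed = simplicial_face_closed[OF Y] simplicial_degen_closed[OF Y]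
  note q_simps = ssmap_face[OF q, symmetric] ssmap_degen[OF q, symmetric]
  fix n i j :: nat and x
  show "sd Z (Suc n) i x \<in> sS Z n" if "x \<in> sS Z (Suc n) \<and> i \<le> Suc n"
    using that preimage[of x "Suc n"] closed by (auto simp: q_simps ssmap_closed[OF q])
  show "ss Z n i x \<in> sS Z (Suc n)" if "x \<in> sS Z n \<and> i \<le> n"
    using that preimage[of x n] closed by (auto simp: q_simps ssmap_closed[OF q])
  show "sd Z (Suc n) i (sd Z (Suc (Suc n)) j x) = sd Z (Suc n) (j - 1) (sd Z (Suc (Suc n)) i x)"
    if "x \<in> sS Z (Suc (Suc n)) \<and> i < j \<and> j \<le> Suc (Suc n)"
    using that preimage[of x "Suc (Suc n)"] closed by (auto simp: q_simps simplicial_face_face[OF Y])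
  show "sd Z (Suc (Suc n)) i (ss Z (Suc n) j x) = ss Z n (j - 1) (sd Z (Suc n) i x)"
    if "x \<in> sS Z (Suc n) \<and> i < j \<and> j \<le> Suc n"
    using that preimage[of x "Suc n"] closed by (auto simp: q_simps simplicial_face_degen_less[OF Y])
  show "sd Z (Suc n) j (ss Z n j x) = x" if "x \<in> sS Z n \<and> j \<le> n"
    using that preimage[of x n] closed by (auto simp: q_simps simplicial_face_degen_same[OF Y])
  show "sd Z (Suc n) (Suc j) (ss Z n j x) = x" if "x \<in> sS Z n \<and> j \<le> n"
    using that preimage[of x n] closed by (auto simp: q_simps simplicial_face_Suc_degen[OF Y])
  show "sd Z (Suc (Suc n)) i (ss Z (Suc n) j x) = ss Z n j (sd Z (Suc n) (i - 1) x)"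
    if "x \<in> sS Z (Suc n) \<and> Suc j < i \<and> i \<le> Suc (Suc n)"
    using that preimage[of x "Suc n"] closed by (auto simp: q_simps simplicial_face_degen_greater[OF Y])
  show "ss Z (Suc n) i (ss Z n j x) = ss Z (Suc n) (Suc j) (ss Z n i x)"
    if "x \<in> sS Z n \<and> i \<le> j \<and> j \<le> n"
    using that preimage[of x n] closed by (auto simp: q_simps simplicial_degen_degen[OF Y])
qed

lemma sAbGrp_surjective_image:
  assumes Y: "sAbGrp Y" and q: "ssmap Y Z q" and surj: "\<And>n. sS Z n \<subseteq> q n ` sS Y n"
    and hom: "\<And>n. q n \<in> hom (sgrp Y n) (sgrp Z n)"
    and Z: "\<And>n. comm_group (sgrp Z n)" "\<And>n. carrier (sgrp Z n) = sS Z n"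
  shows "sAbGrp Z"
proof -
  interpret Y: simplicial_ab_group Y by (rule simplicial_ab_group.intro[OF Y])
  have preimage: "\<exists>y \<in> sS Y n. x = q n y" if "x \<in> sS Z n" for x n
    using that surj by blast
  have q_mult: "q n (a \<otimes>\<^bsub>sgrp Y n\<^esub> b) = q n a \<otimes>\<^bsub>sgrp Z n\<^esub> q n b" if "a \<in> sS Y n" "b \<in> sS Y n" for n a b
    using that hom_mult[OF hom] by simp
  note q_simps = ssmap_face[OF q, symmetric] ssmap_degen[OF q, symmetric] q_mult[symmetric]
  have "sd Z (Suc n) i \<in> hom (sgrp Z (Suc n)) (sgrp Z n)" if "i \<le> Suc n" for n i
  proof (rule homI)
    show "sd Z (Suc n) i x \<in> carrier (sgrp Z n)" if "x \<in> carrier (sgrp Z (Suc n))" for x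
      using \<open>i \<le> Suc n\<close> that preimage[of x "Suc n"] Z(2) Y.face_closed by (auto simp: q_simps ssmap_closed[OF q])
    show "sd Z (Suc n) i (x \<otimes>\<^bsub>sgrp Z (Suc n)\<^esub> y) = sd Z (Suc n) i x \<otimes>\<^bsub>sgrp Z n\<^esub> sd Z (Suc n) i y"
      if "x \<in> carrier (sgrp Z (Suc n))" "y \<in> carrier (sgrp Z (Suc n))" for x y
      using \<open>i \<le> Suc n\<close> that preimage[of x "Suc n"] preimage[of y "Suc n"] Z(2) Y.face_closed
      by (auto simp: q_simps Y.face_mult)
  qed
  moreover have "ss Z n i \<in> hom (sgrp Z n) (sgrp Z (Suc n))" if "i \<le> n" for n i
  proof (rule homI)
    show "ss Z n i x \<in> carrier (sgrp Z (Suc n))" if "x \<in> carrier (sgrp Z n)" for x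
      using \<open>i \<le> n\<close> that preimage[of x n] Z(2) Y.degen_closed by (auto simp: q_simps ssmap_closed[OF q])
    show "ss Z n i (x \<otimes>\<^bsub>sgrp Z n\<^esub> y) = ss Z n i x \<otimes>\<^bsub>sgrp Z (Suc n)\<^esub> ss Z n i y"
      if "x \<in> carrier (sgrp Z n)" "y \<in> carrier (sgrp Z n)" for x y
      using \<open>i \<le> n\<close> that preimage[of x n] preimage[of y n] Z(2) Y.degen_closed
      by (auto simp: q_simps Y.degen_mult)
  qed
  moreover have "simplicial Z"
    by (rule simplicial_surjective_image[OF Y.simplicial q surj])
  ultimately show ?thesis
    unfolding sAbGrp_def using Z by blast
qed

lemma ssmap_factor:
  assumes q: "ssmap Y Z q" and F: "ssmap Y W F" and surj: "\<And>n. sS Z n \<subseteq> q n ` sS Y n"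
    and Y: "simplicial Y" and g: "\<And>n y. y \<in> sS Y n \<Longrightarrow> g n (q n y) = F n y"
  shows "ssmap Z W g"
  unfolding ssmap_def
proof (intro conjI allI impI)
  have preimage: "\<exists>y \<in> sS Y n. x = q n y" if "x \<in> sS Z n" for x n
    using that surj by blast
  note simps = g ssmap_face[OF q, symmetric] ssmap_degen[OF q, symmetric] ssmap_face[OF F] ssmap_degen[OF F]
    simplicial_face_closed[OF Y] simplicial_degen_closed[OF Y]
  fix n i x
  show "g n x \<in> sS W n" if "x \<in> sS Z n"
    using that preimage[of x n] by (auto simp: g ssmap_closed[OF F])
  show "g n (sd Z (Suc n) i x) = sd W (Suc n) i (g (Suc n) x)" if "x \<in> sS Z (Suc n) \<and> i \<le> Suc n"
    using that preimage[of x "Suc n"] by (auto simp: simps)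
  show "g (Suc n) (ss Z n i x) = ss W n i (g n x)" if "x \<in> sS Z n \<and> i \<le> n"
    using that preimage[of x n] by (auto simp: simps)
qed

lemma ssmap_UsT [simp]: "ssmap X (UsT A) f = ssmap X A f"
  by (simp add: ssmap_def)

lemma filler_cong:
  "filler X n k h x \<Longrightarrow> (\<And>i. i \<le> Suc n \<Longrightarrow> i \<noteq> k \<Longrightarrow> h i = h' i) \<Longrightarrow> filler X n k h' x"
  unfolding filler_def by simp

lemma horn_faces:
  assumes X: "simplicial X" and x: "x \<in> sS X (Suc n)" and k: "k \<le> Suc n"
  shows "horn X n k (\<lambda>i. sd X (Suc n) i x)" "filler X n k (\<lambda>i. sd X (Suc n) i x) x"
proof -
  show "horn X n k (\<lambda>i. sd X (Suc n) i x)"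
    unfolding horn_def
  proof (intro conjI allI impI k)
    show "sd X (Suc n) i x \<in> sS X n" if "i \<le> Suc n" for i
      using x that by (rule simplicial_face_closed[OF X])
    fix i j assume ij: "0 < n \<and> i < j \<and> j \<le> Suc n \<and> i \<noteq> k \<and> j \<noteq> k"
    then obtain m where "n = Suc m" by (cases n) auto
    with ij show "sd X n i (sd X (Suc n) j x) = sd X n (j - 1) (sd X (Suc n) i x)"
      using simplicial_face_face[OF X, of x m i j] x by simp
  qed
  show "filler X n k (\<lambda>i. sd X (Suc n) i x) x"
    unfolding filler_def using x by simp
qed

section \<open>The free simplicial abelian group\<close>

definition supp :: "('a \<Rightarrow> int) \<Rightarrow> 'a set" where
  "supp f = {x. f x \<noteq> 0}"

lemma zcarrier_iff: "f \<in> zcarrier X n \<longleftrightarrow> finite (supp f) \<and> supp f \<subseteq> sS X n"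
  unfolding zcarrier_def supp_def by auto

lemma zcarrier_finite_supp: "f \<in> zcarrier X n \<Longrightarrow> finite (supp f)"
  unfolding zcarrier_iff by blast

lemma zcarrier_nonzero: "f \<in> zcarrier X n \<Longrightarrow> f x \<noteq> 0 \<Longrightarrow> x \<in> sS X n"
  unfolding zcarrier_def by blast

lemma zcarrier_add: "f \<in> zcarrier X n \<Longrightarrow> g \<in> zcarrier X n \<Longrightarrow> (\<lambda>x. f x + g x) \<in> zcarrier X n"
proof -
  assume "f \<in> zcarrier X n" "g \<in> zcarrier X n"
  moreover have "supp (\<lambda>x. f x + g x) \<subseteq> supp f \<union> supp g" unfolding supp_def by auto
  ultimately show ?thesis
    unfolding zcarrier_iff by (meson finite_UnI finite_subset le_sup_iff subset_trans)
qed

lemma zcarrier_uminus: "f \<in> zcarrier X n \<Longrightarrow> (\<lambda>x. - f x) \<in> zcarrier X n"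
  unfolding zcarrier_iff supp_def by simp

lemma zcarrier_zero: "(\<lambda>x. 0) \<in> zcarrier X n"
  unfolding zcarrier_iff supp_def by simp

lemma zcarrier_etaZ: "x \<in> sS X n \<Longrightarrow> etaZ x \<in> zcarrier X n"
  unfolding zcarrier_iff supp_def etaZ_def by auto

lemma zgrp_simps [simp]:
  "carrier (zgrp X n) = zcarrier X n"
  "mult (zgrp X n) = (\<lambda>f g x. f x + g x)"
  "one (zgrp X n) = (\<lambda>x. 0)"
  by (simp_all add: zgrp_def)

lemma zgrp_comm_group: "comm_group (zgrp X n)"
proof (rule comm_groupI)
  show "\<exists>g \<in> carrier (zgrp X n). g \<otimes>\<^bsub>zgrp X n\<^esub> f = \<one>\<^bsub>zgrp X n\<^esub>" if "f \<in> carrier (zgrp X n)" for f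
    using that zcarrier_uminus by (intro bexI[of _ "\<lambda>x. - f x"]) auto
qed (auto simp: zcarrier_add zcarrier_zero add.assoc add.commute)

lemma zgrp_inv: "f \<in> zcarrier X n \<Longrightarrow> inv\<^bsub>zgrp X n\<^esub> f = (\<lambda>x. - f x)"
  by (rule group.inv_equality[OF comm_group.axioms(2)[OF zgrp_comm_group]])
    (auto simp: zcarrier_uminus)

lemma zpush_sum:
  assumes "finite S" "supp f \<subseteq> S"
  shows "zpush \<phi> f y = (\<Sum>x\<in>S. if \<phi> x = y then f x else 0)"
proof -
  have "(\<Sum>x\<in>S. if \<phi> x = y then f x else 0) = (\<Sum>x\<in>{x\<in>S. \<phi> x = y}. f x)"
    using assms(1) by (simp add: sum.inter_filter)
  also have "\<dots> = (\<Sum>x\<in>{x. f x \<noteq> 0 \<and> \<phi> x = y}. f x)"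
    using assms by (intro sum.mono_neutral_right) (auto simp: supp_def)
  finally show ?thesis unfolding zpush_def by simp
qed

lemma supp_zpush: "supp (zpush \<phi> f) \<subseteq> \<phi> ` supp f"
proof
  fix y assume "y \<in> supp (zpush \<phi> f)"
  then have "{x. f x \<noteq> 0 \<and> \<phi> x = y} \<noteq> {}"
    unfolding supp_def zpush_def by force
  then show "y \<in> \<phi> ` supp f"
    unfolding supp_def by blast
qed

lemma zpush_zcarrier:
  assumes "f \<in> zcarrier X n" "\<And>x. x \<in> sS X n \<Longrightarrow> \<phi> x \<in> sS Y m"
  shows "zpush \<phi> f \<in> zcarrier Y m"
  using assms supp_zpush[of \<phi> f] finite_surj[OF _ supp_zpush[of \<phi> f]]
  unfolding zcarrier_iff by blast

lemma zpush_add: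
  assumes "finite (supp f)" "finite (supp g)"
  shows "zpush \<phi> (\<lambda>x. f x + g x) = (\<lambda>y. zpush \<phi> f y + zpush \<phi> g y)"
proof
  fix y
  let ?S = "supp f \<union> supp g"
  have S: "finite ?S" using assms by simp
  have "supp (\<lambda>x. f x + g x) \<subseteq> ?S" unfolding supp_def by auto
  then have "zpush \<phi> (\<lambda>x. f x + g x) y = (\<Sum>x\<in>?S. if \<phi> x = y then f x + g x else 0)"
    by (rule zpush_sum[OF S])
  also have "\<dots> = (\<Sum>x\<in>?S. if \<phi> x = y then f x else 0) + (\<Sum>x\<in>?S. if \<phi> x = y then g x else 0)"
    unfolding sum.distrib[symmetric] by (intro sum.cong) auto
  also have "\<dots> = zpush \<phi> f y + zpush \<phi> g y"
    by (simp add: zpush_sum[OF S])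
  finally show "zpush \<phi> (\<lambda>x. f x + g x) y = zpush \<phi> f y + zpush \<phi> g y" .
qed

lemma zpush_etaZ: "zpush \<phi> (etaZ x) = etaZ (\<phi> x)"
proof
  fix y
  have "zpush \<phi> (etaZ x) y = (\<Sum>x'\<in>{x}. if \<phi> x' = y then etaZ x x' else 0)"
    by (rule zpush_sum) (auto simp: supp_def etaZ_def)
  then show "zpush \<phi> (etaZ x) y = etaZ (\<phi> x) y"
    by (simp add: etaZ_def)
qed

lemma zpush_cong: "(\<And>x. f x \<noteq> 0 \<Longrightarrow> \<phi> x = \<psi> x) \<Longrightarrow> zpush \<phi> f = zpush \<psi> f"
  unfolding zpush_def by (intro ext sum.cong) auto

lemma zpush_id: "finite (supp f) \<Longrightarrow> zpush (\<lambda>x. x) f = f"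
  by (rule ext) (simp add: zpush_sum[OF _ order_refl] sum.delta', simp add: supp_def)

lemma zpush_zpush:
  assumes f: "finite (supp f)"
  shows "zpush \<phi> (zpush \<psi> f) = zpush (\<lambda>x. \<phi> (\<psi> x)) f"
proof
  fix z
  let ?S = "supp f"
  have "zpush \<phi> (zpush \<psi> f) z = (\<Sum>y\<in>\<psi> ` ?S. if \<phi> y = z then zpush \<psi> f y else 0)"
    by (rule zpush_sum[OF finite_imageI[OF f] supp_zpush])
  also have "\<dots> = (\<Sum>y\<in>\<psi> ` ?S. \<Sum>x\<in>?S. if \<phi> y = z \<and> \<psi> x = y then f x else 0)"
    using zpush_sum[OF f order_refl, of \<psi>] by (intro sum.cong) (auto simp: sum.neutral)
  also have "\<dots> = (\<Sum>x\<in>?S. \<Sum>y\<in>\<psi> ` ?S. if \<phi> y = z \<and> \<psi> x = y then f x else 0)"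
    by (rule sum.swap)
  also have "\<dots> = (\<Sum>x\<in>?S. if \<phi> (\<psi> x) = z then f x else 0)"
  proof (rule sum.cong[OF refl])
    fix x assume x: "x \<in> ?S"
    have "(\<Sum>y\<in>\<psi> ` ?S. if \<phi> y = z \<and> \<psi> x = y then f x else 0) =
        (\<Sum>y\<in>\<psi> ` ?S. if y = \<psi> x then (if \<phi> (\<psi> x) = z then f x else 0) else 0)"
      by (intro sum.cong) auto
    also have "\<dots> = (if \<phi> (\<psi> x) = z then f x else 0)"
      using x f by (simp add: sum.delta')
    finally show "(\<Sum>y\<in>\<psi> ` ?S. if \<phi> y = z \<and> \<psi> x = y then f x else 0) =
        (if \<phi> (\<psi> x) = z then f x else 0)" .
  qed
  also have "\<dots> = zpush (\<lambda>x. \<phi> (\<psi> x)) f z"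
    by (rule zpush_sum[OF f order_refl, symmetric])
  finally show "zpush \<phi> (zpush \<psi> f) z = zpush (\<lambda>x. \<phi> (\<psi> x)) f z" .
qed

lemma zpush_zpush_eq:
  assumes "f \<in> zcarrier X n" "\<And>y. y \<in> sS X n \<Longrightarrow> \<phi>1 (\<psi>1 y) = \<phi>2 (\<psi>2 y)"
  shows "zpush \<phi>1 (zpush \<psi>1 f) = zpush \<phi>2 (zpush \<psi>2 f)"
proof -
  have "zpush (\<lambda>y. \<phi>1 (\<psi>1 y)) f = zpush (\<lambda>y. \<phi>2 (\<psi>2 y)) f"
    using assms zcarrier_nonzero[OF assms(1)] by (intro zpush_cong) auto
  then show ?thesis
    by (simp add: zpush_zpush zcarrier_finite_supp[OF assms(1)])
qed

lemma zpush_hom: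
  assumes "\<And>x. x \<in> sS X n \<Longrightarrow> \<phi> x \<in> sS Y m"
  shows "zpush \<phi> \<in> hom (zgrp X n) (zgrp Y m)"
  using assms by (intro homI) (auto simp: zpush_zcarrier zpush_add zcarrier_finite_supp)

lemma ZZ_simps [simp]:
  "sS (ZZ X) = zcarrier X" "sd (ZZ X) n i = zpush (sd X n i)" "ss (ZZ X) n i = zpush (ss X n i)"
  "sgrp (ZZ X) = zgrp X"
  by (simp_all add: ZZ_def)

lemma ZZ_simplicial:
  assumes X: "simplicial X"
  shows "simplicial (ZZ X)"
  unfolding simplicial_def ZZ_simps
proof (intro conjI allI impI)
  note closed = simplicial_face_closed[OF X] simplicial_degen_closed[OF X]
  fix n i j :: nat and x
  show "zpush (sd X (Suc n) i) x \<in> zcarrier X n" if "x \<in> zcarrier X (Suc n) \<and> i \<le> Suc n"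
    using that closed by (auto intro: zpush_zcarrier)
  show "zpush (ss X n i) x \<in> zcarrier X (Suc n)" if "x \<in> zcarrier X n \<and> i \<le> n"
    using that closed by (auto intro: zpush_zcarrier)
  show "zpush (sd X (Suc n) i) (zpush (sd X (Suc (Suc n)) j) x) =
      zpush (sd X (Suc n) (j - 1)) (zpush (sd X (Suc (Suc n)) i) x)"
    if "x \<in> zcarrier X (Suc (Suc n)) \<and> i < j \<and> j \<le> Suc (Suc n)"
    using that by (auto intro: zpush_zpush_eq simp: simplicial_face_face[OF X])
  show "zpush (sd X (Suc (Suc n)) i) (zpush (ss X (Suc n) j) x) =
      zpush (ss X n (j - 1)) (zpush (sd X (Suc n) i) x)"
    if "x \<in> zcarrier X (Suc n) \<and> i < j \<and> j \<le> Suc n"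
    using that by (auto intro: zpush_zpush_eq simp: simplicial_face_degen_less[OF X])
  show "zpush (sd X (Suc n) j) (zpush (ss X n j) x) = x" if "x \<in> zcarrier X n \<and> j \<le> n"
    using that zpush_zpush_eq[of x X n "sd X (Suc n) j" "ss X n j" "\<lambda>x. x" "\<lambda>x. x"]
    by (simp add: simplicial_face_degen_same[OF X] zpush_id zcarrier_finite_supp[of x X n])
  show "zpush (sd X (Suc n) (Suc j)) (zpush (ss X n j) x) = x" if "x \<in> zcarrier X n \<and> j \<le> n"
    using that zpush_zpush_eq[of x X n "sd X (Suc n) (Suc j)" "ss X n j" "\<lambda>x. x" "\<lambda>x. x"]
    by (simp add: simplicial_face_Suc_degen[OF X] zpush_id zcarrier_finite_supp[of x X n])
  show "zpush (sd X (Suc (Suc n)) i) (zpush (ss X (Suc n) j) x) =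
      zpush (ss X n j) (zpush (sd X (Suc n) (i - 1)) x)"
    if "x \<in> zcarrier X (Suc n) \<and> Suc j < i \<and> i \<le> Suc (Suc n)"
    using that by (auto intro: zpush_zpush_eq simp: simplicial_face_degen_greater[OF X])
  show "zpush (ss X (Suc n) i) (zpush (ss X n j) x) = zpush (ss X (Suc n) (Suc j)) (zpush (ss X n i) x)"
    if "x \<in> zcarrier X n \<and> i \<le> j \<and> j \<le> n"
    using that by (auto intro: zpush_zpush_eq simp: simplicial_degen_degen[OF X])
qed

lemma ZZ_sAbGrp:
  assumes X: "simplicial X"
  shows "sAbGrp (ZZ X)"
  unfolding sAbGrp_def
  using ZZ_simplicial[OF X] zgrp_comm_group simplicial_face_closed[OF X] simplicial_degen_closed[OF X]
  by (auto intro!: zpush_hom)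

lemma etaZ_ssmap: "ssmap X (ZZ X) (\<lambda>n. etaZ)"
  unfolding ssmap_def by (simp add: zcarrier_etaZ zpush_etaZ)

lemma zcarrier_weight_induct:
  assumes zero: "P (\<lambda>x. 0)"
    and add: "\<And>c x. c \<in> zcarrier X n \<Longrightarrow> x \<in> sS X n \<Longrightarrow> P c \<Longrightarrow> P (\<lambda>y. c y + etaZ x y)"
    and diff: "\<And>c x. c \<in> zcarrier X n \<Longrightarrow> x \<in> sS X n \<Longrightarrow> P c \<Longrightarrow> P (\<lambda>y. c y - etaZ x y)"
    and S: "finite S"
  shows "c \<in> zcarrier X n \<Longrightarrow> supp c \<subseteq> S \<Longrightarrow> (\<Sum>x\<in>S. \<bar>c x\<bar>) = int k \<Longrightarrow> P c"
proof (induction k arbitrary: c)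
  case 0
  then have "c = (\<lambda>x. 0)"
    using S unfolding supp_def by (auto simp: sum_nonneg_eq_0_iff)
  then show ?case using zero by simp
next
  case (Suc k)
  have "\<exists>x\<in>S. c x \<noteq> 0"
  proof (rule ccontr)
    assume "\<not> (\<exists>x\<in>S. c x \<noteq> 0)"
    then have "(\<Sum>x\<in>S. \<bar>c x\<bar>) = 0" by simp
    with Suc.prems(3) show False by simp
  qed
  then obtain x where x: "x \<in> S" "c x \<noteq> 0" by blast
  have xS: "x \<in> sS X n" by (rule zcarrier_nonzero[OF Suc.prems(1) x(2)])
  define e where "e = (if c x > 0 then 1 else - 1 :: int)"
  define c' where "c' = (\<lambda>y. c y - e * etaZ x y)"
  have sub: "supp c' \<subseteq> insert x (supp c)"
    unfolding c'_def supp_def etaZ_def by auto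
  have c': "c' \<in> zcarrier X n" "supp c' \<subseteq> S"
    using finite_subset[OF sub] sub Suc.prems(1,2) x(1) xS unfolding zcarrier_iff by auto
  have "\<bar>c' x\<bar> = \<bar>c x\<bar> - 1"
    using x(2) unfolding c'_def e_def etaZ_def by auto
  moreover have "(\<Sum>y\<in>S - {x}. \<bar>c' y\<bar>) = (\<Sum>y\<in>S - {x}. \<bar>c y\<bar>)"
    unfolding c'_def etaZ_def by (intro sum.cong) auto
  ultimately have "(\<Sum>y\<in>S. \<bar>c' y\<bar>) = int k"
    using Suc.prems(3) S x(1) by (simp add: sum.remove)
  then have "P c'"
    using Suc.IH[OF c'] by blast
  then show ?case
  proof (cases "c x > 0")
    case True
    then have "c = (\<lambda>y. c' y + etaZ x y)" unfolding c'_def e_def by auto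
    then show ?thesis using add[OF c'(1) xS \<open>P c'\<close>] by simp
  next
    case False
    then have "c = (\<lambda>y. c' y - etaZ x y)" unfolding c'_def e_def by auto
    then show ?thesis using diff[OF c'(1) xS \<open>P c'\<close>] by simp
  qed
qed

lemma zcarrier_induct [consumes 1, case_names zero add diff]:
  assumes c: "c \<in> zcarrier X n"
    and zero: "P (\<lambda>x. 0)"
    and add: "\<And>c x. c \<in> zcarrier X n \<Longrightarrow> x \<in> sS X n \<Longrightarrow> P c \<Longrightarrow> P (\<lambda>y. c y + etaZ x y)"
    and diff: "\<And>c x. c \<in> zcarrier X n \<Longrightarrow> x \<in> sS X n \<Longrightarrow> P c \<Longrightarrow> P (\<lambda>y. c y - etaZ x y)"
  shows "P c"
proof -
  have "(\<Sum>x\<in>supp c. \<bar>c x\<bar>) = int (nat (\<Sum>x\<in>supp c. \<bar>c x\<bar>))"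
    by (simp add: sum_nonneg)
  then show ?thesis
    using zcarrier_weight_induct[OF zero add diff zcarrier_finite_supp[OF c] c order_refl] by blast
qed

lemma zgrp_hom_eqI:
  assumes G: "group G" and \<phi>: "\<phi> \<in> hom (zgrp X n) G" and \<psi>: "\<psi> \<in> hom (zgrp X n) G"
    and eta: "\<And>x. x \<in> sS X n \<Longrightarrow> \<phi> (etaZ x) = \<psi> (etaZ x)"
    and c: "c \<in> zcarrier X n"
  shows "\<phi> c = \<psi> c"
  using c
proof (induction rule: zcarrier_induct)
  interpret Z: comm_group "zgrp X n" by (rule zgrp_comm_group)
  interpret \<phi>: group_hom "zgrp X n" G \<phi> by (simp add: group_hom_def group_hom_axioms_def G \<phi> Z.is_group)
  interpret \<psi>: group_hom "zgrp X n" G \<psi> by (simp add: group_hom_def group_hom_axioms_def G \<psi> Z.is_group)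
  {
    case zero
    show ?case using \<phi>.hom_one \<psi>.hom_one by simp
  next
    case (add c x)
    then show ?case
      using \<phi>.hom_mult[of c "etaZ x"] \<psi>.hom_mult[of c "etaZ x"] eta by (simp add: zcarrier_etaZ)
  next
    case (diff c x)
    have c: "c \<in> carrier (zgrp X n)" and e: "etaZ x \<in> carrier (zgrp X n)"
      using diff by (simp_all add: zcarrier_etaZ)
    have "(\<lambda>y. c y - etaZ x y) = c \<otimes>\<^bsub>zgrp X n\<^esub> inv\<^bsub>zgrp X n\<^esub> etaZ x"
      using diff by (simp add: zgrp_inv zcarrier_etaZ)
    moreover have "\<phi> (c \<otimes>\<^bsub>zgrp X n\<^esub> inv\<^bsub>zgrp X n\<^esub> etaZ x) = \<phi> c \<otimes>\<^bsub>G\<^esub> inv\<^bsub>G\<^esub> \<phi> (etaZ x)"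
      "\<psi> (c \<otimes>\<^bsub>zgrp X n\<^esub> inv\<^bsub>zgrp X n\<^esub> etaZ x) = \<psi> c \<otimes>\<^bsub>G\<^esub> inv\<^bsub>G\<^esub> \<psi> (etaZ x)"
      by (simp_all only: \<phi>.hom_mult[OF c Z.inv_closed[OF e]] \<psi>.hom_mult[OF c Z.inv_closed[OF e]]
          \<phi>.hom_inv[OF e] \<psi>.hom_inv[OF e])
    ultimately show ?case
      using diff eta by simp
  }
qed

definition free_lift :: "('b, 'm) monoid_scheme \<Rightarrow> ('a \<Rightarrow> 'b) \<Rightarrow> ('a \<Rightarrow> int) \<Rightarrow> 'b" where
  "free_lift G \<phi> c = finprod G (\<lambda>x. \<phi> x [^]\<^bsub>G\<^esub> c x) (supp c)"

context comm_group
begin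

lemma free_lift_eq_finprod:
  assumes "finite S" "supp c \<subseteq> S" "\<phi> \<in> S \<rightarrow> carrier G"
  shows "free_lift G \<phi> c = (\<Otimes>x\<in>S. \<phi> x [^] c x)"
  unfolding free_lift_def
  using assms by (intro finprod_mono_neutral_cong_left) (auto simp: supp_def)

lemma free_lift_hom:
  assumes \<phi>: "\<And>x. x \<in> sS X n \<Longrightarrow> \<phi> x \<in> carrier G"
  shows "free_lift G \<phi> \<in> hom (zgrp X n) G"
proof (rule homI)
  show "free_lift G \<phi> c \<in> carrier G" if "c \<in> carrier (zgrp X n)" for c
    unfolding free_lift_def using that \<phi> by (auto simp: zcarrier_iff intro!: finprod_closed)
  fix a b assume "a \<in> carrier (zgrp X n)" "b \<in> carrier (zgrp X n)"
  then have S: "finite (supp a \<union> supp b)" "supp a \<union> supp b \<subseteq> sS X n"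
    by (auto simp: zcarrier_iff)
  have ab: "supp (\<lambda>x. a x + b x) \<subseteq> supp a \<union> supp b" unfolding supp_def by auto
  have \<phi>S: "\<phi> \<in> supp a \<union> supp b \<rightarrow> carrier G" using S(2) \<phi> by auto
  have "free_lift G \<phi> (\<lambda>x. a x + b x) = (\<Otimes>x\<in>supp a \<union> supp b. \<phi> x [^] (a x + b x))"
    by (rule free_lift_eq_finprod[OF S(1) ab \<phi>S])
  also have "\<dots> = (\<Otimes>x\<in>supp a \<union> supp b. \<phi> x [^] a x \<otimes> \<phi> x [^] b x)"
    using \<phi>S by (intro finprod_cong') (auto simp: int_pow_mult Pi_iff)
  also have "\<dots> = (\<Otimes>x\<in>supp a \<union> supp b. \<phi> x [^] a x) \<otimes> (\<Otimes>x\<in>supp a \<union> supp b. \<phi> x [^] b x)"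
    using \<phi>S by (intro finprod_multf) auto
  also have "\<dots> = free_lift G \<phi> a \<otimes> free_lift G \<phi> b"
    using \<phi>S by (simp add: free_lift_eq_finprod[OF S(1)])
  finally show "free_lift G \<phi> (a \<otimes>\<^bsub>zgrp X n\<^esub> b) = free_lift G \<phi> a \<otimes> free_lift G \<phi> b"
    by simp
qed

lemma free_lift_etaZ: "\<phi> x \<in> carrier G \<Longrightarrow> free_lift G \<phi> (etaZ x) = \<phi> x"
proof -
  have "supp (etaZ x) = {x}" unfolding supp_def etaZ_def by auto
  then show "\<phi> x \<in> carrier G \<Longrightarrow> ?thesis"
    unfolding free_lift_def by (simp add: etaZ_def)
qed

end

section \<open>The simplicial abelian group \<open>Ab\<^sub>s\<^sub>T(X)\<close>\<close>

locale sT_complex =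
  fixes X :: "'a stcx"
  assumes sTcomplex: "sTcomplex X"
begin

lemma simplicial: "simplicial X"
  using sTcomplex unfolding sTcomplex_def by blast

lemma sthin_closed: "x \<in> sthin X n \<Longrightarrow> x \<in> sS X n"
  using sTcomplex unfolding sTcomplex_def by blast

lemma sthin_0: "sthin X 0 = {}"
  using sTcomplex unfolding sTcomplex_def by blast

lemma horn_unique_thin_filler: "horn X n k h \<Longrightarrow> \<exists>!x. filler X n k h x \<and> x \<in> sthin X (Suc n)"
  using sTcomplex unfolding sTcomplex_def by blast

lemma fill: "horn X n k h \<Longrightarrow> filler X n k h (fill X n k h) \<and> fill X n k h \<in> sthin X (Suc n)"
  unfolding fill_def by (rule theI'[OF horn_unique_thin_filler])

lemma fill_eqI: "horn X n k h \<Longrightarrow> filler X n k h x \<Longrightarrow> x \<in> sthin X (Suc n) \<Longrightarrow> fill X n k h = x"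
  using fill horn_unique_thin_filler by blast

sublocale Z: simplicial_ab_group "ZZ X"
  by (rule simplicial_ab_group.intro[OF ZZ_sAbGrp[OF simplicial]])

lemma fill_ZZ:
  assumes "horn X n k h"
  shows "filler (ZZ X) n k (\<lambda>i. etaZ (h i)) (fill (UsT (ZZ X)) n k (\<lambda>i. etaZ (h i)))"
    and "fill (UsT (ZZ X)) n k (\<lambda>i. etaZ (h i)) \<in> degenerate_sums (ZZ X) (Suc n)"
  using Z.fill_UsT[OF ssmap_horn[OF etaZ_ssmap assms]] by auto

lemma relgen_zcarrier: "(n, f) \<in> relgen X \<Longrightarrow> f \<in> zcarrier X n"
proof (induction rule: relgen.induct)
  case (gen n k h)
  have "fill (UsT (ZZ X)) n k (\<lambda>i. etaZ (h i)) \<in> zcarrier X (Suc n)"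
    using Z.degenerate_sums_closed fill_ZZ(2)[OF gen] by simp
  moreover have "etaZ (fill X n k h) \<in> zcarrier X (Suc n)"
    using fill[OF gen] sthin_closed by (simp add: zcarrier_etaZ)
  ultimately show ?case
    using zcarrier_add[OF _ zcarrier_uminus] by simp
next
  case (face n f i)
  then show ?case
    using simplicial_face_closed[OF simplicial] by (auto intro: zpush_zcarrier)
next
  case (degen n f i)
  then show ?case
    using simplicial_degen_closed[OF simplicial] by (auto intro: zpush_zcarrier)
qed (simp_all add: zcarrier_zero zcarrier_add zcarrier_uminus)

lemma relN_subgroup: "subgroup (relN X n) (zgrp X n)"
proof (rule subgroup.intro)
  show "relN X n \<subseteq> carrier (zgrp X n)"
    using relgen_zcarrier unfolding relN_def by auto
  show "x \<otimes>\<^bsub>zgrp X n\<^esub> y \<in> relN X n" if "x \<in> relN X n" "y \<in> relN X n" for x y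
    using that relgen.add unfolding relN_def by simp
  show "\<one>\<^bsub>zgrp X n\<^esub> \<in> relN X n"
    using relgen.zero unfolding relN_def by simp
  show "inv\<^bsub>zgrp X n\<^esub> x \<in> relN X n" if "x \<in> relN X n" for x
    using that relgen.neg relgen_zcarrier unfolding relN_def by (simp add: zgrp_inv)
qed

lemma relN_normal: "relN X n \<lhd> zgrp X n"
  by (rule comm_group.subgroup_imp_normal[OF zgrp_comm_group relN_subgroup])

interpretation relN: normal "relN X n" "zgrp X n"
  by (rule relN_normal)

abbreviation zclass :: "nat \<Rightarrow> ('a \<Rightarrow> int) \<Rightarrow> ('a \<Rightarrow> int) set" where
  "zclass n f \<equiv> r_coset (zgrp X n) (relN X n) f"

lemma sS_AbST: "sS (AbST X) n = zclass n ` zcarrier X n"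
  by (auto simp: AbST_def RCOSETS_def)

lemma sgrp_AbST: "sgrp (AbST X) n = zgrp X n Mod relN X n"
  by (simp add: AbST_def)

lemma zclass_hom: "zclass n \<in> hom (sgrp (ZZ X) n) (sgrp (AbST X) n)"
  unfolding sgrp_AbST ZZ_simps by (rule relN.r_coset_hom_Mod)

lemma zclass_eqI:
  assumes "a \<in> zcarrier X n" "b \<in> zcarrier X n" "(\<lambda>y. a y - b y) \<in> relN X n"
  shows "zclass n a = zclass n b"
proof -
  have "(\<lambda>y. a y - b y) \<otimes>\<^bsub>zgrp X n\<^esub> b \<in> zclass n b"
    using assms relN.subset by (intro relN.rcosI) auto
  then have "a \<in> zclass n b" by simp
  from relN.repr_independence[OF this _ relN_subgroup] assms(2) show ?thesis
    by simp
qed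

lemma zclass_zpush:
  assumes b: "b \<in> zcarrier X n" and a: "a \<in> zclass n b"
    and closed: "\<And>x. x \<in> sS X n \<Longrightarrow> \<phi> x \<in> sS X m"
    and rel: "\<And>f. f \<in> relN X n \<Longrightarrow> zpush \<phi> f \<in> relN X m"
  shows "zclass m (zpush \<phi> a) = zclass m (zpush \<phi> b)"
proof -
  obtain r where r: "r \<in> relN X n" "a = (\<lambda>y. r y + b y)"
    using a unfolding r_coset_def by auto
  have "r \<in> zcarrier X n" using r(1) relN.subset by auto
  then have "zpush \<phi> a = zpush \<phi> r \<otimes>\<^bsub>zgrp X m\<^esub> zpush \<phi> b"
    unfolding r(2) by (simp add: zpush_add zcarrier_finite_supp[OF b] zcarrier_finite_supp)
  also have "\<dots> \<in> zclass m (zpush \<phi> b)"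
    using rel[OF r(1)] relN.subset zpush_zcarrier[OF b closed] by (intro relN.rcosI) auto
  finally show ?thesis
    using relN.repr_independence[OF _ _ relN_subgroup] zpush_zcarrier[OF b closed] by simp
qed

lemma zclass_some_member: "b \<in> zcarrier X n \<Longrightarrow> (SOME f. f \<in> zclass n b) \<in> zclass n b"
  by (rule someI[of "\<lambda>f. f \<in> zclass n b" b]) (simp add: relN.rcos_self relN_subgroup)

lemma sd_AbST:
  assumes b: "b \<in> zcarrier X (Suc n)" and i: "i \<le> Suc n"
  shows "sd (AbST X) (Suc n) i (zclass (Suc n) b) = zclass n (zpush (sd X (Suc n) i) b)"
proof -
  have "sd (AbST X) (Suc n) i (zclass (Suc n) b) =
      zclass n (zpush (sd X (Suc n) i) (SOME f. f \<in> zclass (Suc n) b))"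
    by (simp add: AbST_def)
  also have "\<dots> = zclass n (zpush (sd X (Suc n) i) b)"
    using relgen.face[OF _ i] simplicial_face_closed[OF simplicial _ i]
    by (intro zclass_zpush[OF b zclass_some_member[OF b]]) (auto simp: relN_def)
  finally show ?thesis .
qed

lemma ss_AbST:
  assumes b: "b \<in> zcarrier X n" and i: "i \<le> n"
  shows "ss (AbST X) n i (zclass n b) = zclass (Suc n) (zpush (ss X n i) b)"
proof -
  have "ss (AbST X) n i (zclass n b) = zclass (Suc n) (zpush (ss X n i) (SOME f. f \<in> zclass n b))"
    by (simp add: AbST_def)
  also have "\<dots> = zclass (Suc n) (zpush (ss X n i) b)"
    using relgen.degen[OF _ i] simplicial_degen_closed[OF simplicial _ i]
    by (intro zclass_zpush[OF b zclass_some_member[OF b]]) (auto simp: relN_def)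
  finally show ?thesis .
qed

lemma zclass_ssmap: "ssmap (ZZ X) (AbST X) zclass"
  unfolding ssmap_def using sd_AbST ss_AbST by (auto simp: sS_AbST)

lemma AbST_sAbGrp: "sAbGrp (AbST X)"
  by (rule sAbGrp_surjective_image[OF Z.sAbGrp zclass_ssmap _ zclass_hom])
    (auto simp: sS_AbST sgrp_AbST comm_group.abelian_FactGroup[OF zgrp_comm_group relN_subgroup]
      carrier_FactGroup)

lemma zclass_sAbhom: "sAbhom (ZZ X) (AbST X) zclass"
  unfolding sAbhom_def using zclass_ssmap zclass_hom by simp

lemma unitAb_sTmap: "sTmap X (UsT (AbST X)) (unitAb X)"
  unfolding sTmap_def
proof
  show "ssmap X (UsT (AbST X)) (unitAb X)"
    using ssmap_comp[OF simplicial etaZ_ssmap zclass_ssmap] by (simp add: unitAb_def[abs_def])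
  show "\<forall>n x. x \<in> sthin X n \<longrightarrow> unitAb X n x \<in> sthin (UsT (AbST X)) n"
  proof (intro allI impI)
    fix n x assume x: "x \<in> sthin X n"
    then obtain m where m: "n = Suc m"
      using sthin_0 by (cases n) auto
    define h where "h = (\<lambda>i. sd X (Suc m) i x)"
    have h: "horn X m 0 h" and "fill X m 0 h = x"
      using horn_faces[OF simplicial, of x m 0] x m sthin_closed fill_eqI unfolding h_def by auto
    define z where "z = fill (UsT (ZZ X)) m 0 (\<lambda>i. etaZ (h i))"
    have "(\<lambda>y. z y - etaZ x y) \<in> relN X (Suc m)"
      using relgen.gen[OF h] \<open>fill X m 0 h = x\<close> unfolding relN_def z_def by simp
    moreover have "z \<in> zcarrier X (Suc m)" "etaZ x \<in> zcarrier X (Suc m)"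
      using Z.degenerate_sums_closed fill_ZZ(2)[OF h] x m sthin_closed
      by (auto simp: z_def zcarrier_etaZ)
    ultimately have "zclass (Suc m) (etaZ x) = zclass (Suc m) z"
      using zclass_eqI by metis
    moreover have "zclass (Suc m) z \<in> degenerate_sums (AbST X) (Suc m)"
      unfolding z_def by (rule sAbhom_degenerate_sums[OF Z.sAbGrp AbST_sAbGrp zclass_sAbhom fill_ZZ(2)[OF h]])
    ultimately show "unitAb X n x \<in> sthin (UsT (AbST X)) n"
      unfolding unitAb_def m sthin_UsT by simp
  qed
qed

end

section \<open>The universal property of the unit\<close>

locale sTmap_to_UsT = sT_complex X + A: simplicial_ab_group A
  for X :: "'a stcx" and A :: "'b sab" +
  fixes f :: "nat \<Rightarrow> 'a \<Rightarrow> 'b"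
  assumes sTmap: "sTmap X (UsT A) f"
begin

lemma f_ssmap: "ssmap X A f"
  using sTmap unfolding sTmap_def by simp

lemma f_thin: "x \<in> sthin X (Suc n) \<Longrightarrow> f (Suc n) x \<in> degenerate_sums A (Suc n)"
  using sTmap unfolding sTmap_def by (metis sthin_UsT nat.distinct(1))

definition lift :: "nat \<Rightarrow> ('a \<Rightarrow> int) \<Rightarrow> 'b" where
  "lift n = free_lift (sgrp A n) (f n)"

lemma lift_hom: "lift n \<in> hom (zgrp X n) (sgrp A n)"
  unfolding lift_def using ssmap_closed[OF f_ssmap] by (intro A.G.free_lift_hom) simp

lemma lift_group_hom: "group_hom (zgrp X n) (sgrp A n) (lift n)"
  using lift_hom Z.G.is_group A.G.is_group by (simp add: group_hom_def group_hom_axioms_def)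

lemma lift_etaZ: "x \<in> sS X n \<Longrightarrow> lift n (etaZ x) = f n x"
  unfolding lift_def using ssmap_closed[OF f_ssmap] by (simp add: A.G.free_lift_etaZ)

lemma lift_zpush:
  assumes closed: "\<And>x. x \<in> sS X n \<Longrightarrow> \<phi> x \<in> sS X m"
    and \<psi>: "\<psi> \<in> hom (sgrp A n) (sgrp A m)"
    and f: "\<And>x. x \<in> sS X n \<Longrightarrow> f m (\<phi> x) = \<psi> (f n x)"
    and c: "c \<in> zcarrier X n"
  shows "lift m (zpush \<phi> c) = \<psi> (lift n c)"
proof -
  have "lift m \<circ> zpush \<phi> \<in> hom (zgrp X n) (sgrp A m)" "\<psi> \<circ> lift n \<in> hom (zgrp X n) (sgrp A m)"
    using hom_compose[OF zpush_hom[of X n \<phi> X m] lift_hom] hom_compose[OF lift_hom \<psi>] closed by simp_all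
  from zgrp_hom_eqI[OF A.G.is_group this _ c] show ?thesis
    using closed f by (simp add: zpush_etaZ lift_etaZ)
qed

lemma lift_sAbhom: "sAbhom (ZZ X) A lift"
  unfolding sAbhom_def ssmap_def
  using hom_in_carrier[OF lift_hom] lift_hom
    lift_zpush[OF _ A.face_hom ssmap_face[OF f_ssmap]] lift_zpush[OF _ A.degen_hom ssmap_degen[OF f_ssmap]]
    simplicial_face_closed[OF simplicial] simplicial_degen_closed[OF simplicial]
  by simp

text \<open>Both sides are thin fillers of the horn \<open>f \<circ> h\<close> in \<open>A\<close>, which has only one.\<close>

lemma lift_fill:
  assumes h: "horn X n k h"
  shows "lift (Suc n) (fill (UsT (ZZ X)) n k (\<lambda>i. etaZ (h i))) = f (Suc n) (fill X n k h)"
proof (rule A.horn_thin_filler_unique[OF _ _ _ _ horn_le[OF h]])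
  show "filler A n k (\<lambda>i. f n (h i)) (lift (Suc n) (fill (UsT (ZZ X)) n k (\<lambda>i. etaZ (h i))))"
    using ssmap_filler[OF conjunct1[OF lift_sAbhom[unfolded sAbhom_def]] fill_ZZ(1)[OF h]]
    by (rule filler_cong) (simp add: lift_etaZ horn_closed[OF h])
  show "lift (Suc n) (fill (UsT (ZZ X)) n k (\<lambda>i. etaZ (h i))) \<in> degenerate_sums A (Suc n)"
    by (rule sAbhom_degenerate_sums[OF Z.sAbGrp A.sAbGrp lift_sAbhom fill_ZZ(2)[OF h]])
  show "filler A n k (\<lambda>i. f n (h i)) (f (Suc n) (fill X n k h))"
    using ssmap_filler[OF f_ssmap] fill[OF h] by blast
  show "f (Suc n) (fill X n k h) \<in> degenerate_sums A (Suc n)"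
    using f_thin fill[OF h] by blast
qed

lemma lift_horn_relation:
  assumes h: "horn X n k h"
  shows "lift (Suc n) (\<lambda>y. fill (UsT (ZZ X)) n k (\<lambda>i. etaZ (h i)) y - etaZ (fill X n k h) y) = \<one>\<^bsub>sgrp A (Suc n)\<^esub>"
proof -
  define z where "z = fill (UsT (ZZ X)) n k (\<lambda>i. etaZ (h i))"
  define x where "x = fill X n k h"
  have xS: "x \<in> sS X (Suc n)"
    using fill[OF h] sthin_closed unfolding x_def by blast
  have z: "z \<in> carrier (zgrp X (Suc n))"
    using Z.degenerate_sums_closed fill_ZZ(2)[OF h] unfolding z_def by simp
  have e: "etaZ x \<in> carrier (zgrp X (Suc n))" "inv\<^bsub>zgrp X (Suc n)\<^esub> etaZ x \<in> carrier (zgrp X (Suc n))"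
    using xS by (simp_all add: zcarrier_etaZ zgrp_inv zcarrier_uminus)
  have "(\<lambda>y. z y - etaZ x y) = z \<otimes>\<^bsub>zgrp X (Suc n)\<^esub> inv\<^bsub>zgrp X (Suc n)\<^esub> etaZ x"
    using xS by (simp add: zgrp_inv zcarrier_etaZ)
  then have "lift (Suc n) (\<lambda>y. z y - etaZ x y) =
      lift (Suc n) z \<otimes>\<^bsub>sgrp A (Suc n)\<^esub> inv\<^bsub>sgrp A (Suc n)\<^esub> lift (Suc n) (etaZ x)"
    using z e by (simp del: zgrp_simps add: group_hom.hom_mult[OF lift_group_hom] group_hom.hom_inv[OF lift_group_hom])
  also have "\<dots> = \<one>\<^bsub>sgrp A (Suc n)\<^esub>"
    using xS ssmap_closed[OF f_ssmap] by (simp add: z_def x_def lift_fill[OF h] lift_etaZ)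
  finally show ?thesis
    unfolding z_def x_def .
qed

lemma lift_relgen: "(n, c) \<in> relgen X \<Longrightarrow> lift n c = \<one>\<^bsub>sgrp A n\<^esub>"
proof (induction rule: relgen.induct)
  case (gen n k h)
  then show ?case by (rule lift_horn_relation)
next
  case (zero n)
  then show ?case using group_hom.hom_one[OF lift_group_hom] by simp
next
  case (add n f g)
  then show ?case using hom_mult[OF lift_hom, of f n g] relgen_zcarrier by simp
next
  case (neg n f)
  then show ?case
    using group_hom.hom_inv[OF lift_group_hom, of f n] relgen_zcarrier by (simp add: zgrp_inv)
next
  case (face n f i)
  then show ?case
    using lift_zpush[OF _ A.face_hom ssmap_face[OF f_ssmap]] relgen_zcarrier
      simplicial_face_closed[OF simplicial] A.face_one by simp
next
  case (degen n f i)
  then show ?case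
    using lift_zpush[OF _ A.degen_hom ssmap_degen[OF f_ssmap]] relgen_zcarrier
      simplicial_degen_closed[OF simplicial] A.degen_one by simp
qed

lemma lift_zclass_eq:
  assumes a: "a \<in> zcarrier X n" and b: "b \<in> zcarrier X n" and ab: "zclass n a = zclass n b"
  shows "lift n a = lift n b"
proof -
  have "a \<in> zclass n b"
    using ab a by (metis group.rcos_self relN_subgroup zgrp_comm_group comm_group.axioms(2) zgrp_simps(1))
  then obtain r where r: "r \<in> relN X n" "a = (\<lambda>y. r y + b y)"
    unfolding r_coset_def by auto
  then have "r \<in> carrier (zgrp X n)"
    using relgen_zcarrier unfolding relN_def by simp
  then have "lift n a = lift n r \<otimes>\<^bsub>sgrp A n\<^esub> lift n b"
    using r(2) b group_hom.hom_mult[OF lift_group_hom, of r n b] by simp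
  then show ?thesis
    using r(1) lift_relgen hom_in_carrier[OF lift_hom] b unfolding relN_def by simp
qed

lemma induced_hom_exists:
  obtains g where "sAbhom (AbST X) A g" "\<And>n c. c \<in> zcarrier X n \<Longrightarrow> g n (zclass n c) = lift n c"
proof -
  have "\<exists>g. g \<in> hom (sgrp (AbST X) n) (sgrp A n) \<and> (\<forall>c \<in> zcarrier X n. g (zclass n c) = lift n c)" for n
    using FactGroup_universal[OF lift_hom relN_normal] lift_zclass_eq unfolding sgrp_AbST by (metis zgrp_simps(1))
  then obtain g where g: "\<And>n. g n \<in> hom (sgrp (AbST X) n) (sgrp A n)"
    "\<And>n c. c \<in> zcarrier X n \<Longrightarrow> g n (zclass n c) = lift n c"
    by metis
  have "ssmap (AbST X) A g"
    using zclass_ssmap conjunct1[OF lift_sAbhom[unfolded sAbhom_def]] _ Z.simplicial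
    by (rule ssmap_factor) (auto simp: sS_AbST g(2))
  with g(1) have "sAbhom (AbST X) A g"
    unfolding sAbhom_def by blast
  from that[OF this g(2)] show thesis .
qed

lemma induced_hom_unique:
  assumes g: "sAbhom (AbST X) A g" and unit: "\<And>n x. x \<in> sS X n \<Longrightarrow> g n (unitAb X n x) = f n x"
    and c: "c \<in> zcarrier X n"
  shows "g n (zclass n c) = lift n c"
proof -
  have "g n \<in> hom (sgrp (AbST X) n) (sgrp A n)"
    using g unfolding sAbhom_def by blast
  from hom_compose[OF zclass_hom this] have "g n \<circ> zclass n \<in> hom (zgrp X n) (sgrp A n)"
    by simp
  from zgrp_hom_eqI[OF A.G.is_group this lift_hom _ c] show ?thesis
    using unit by (simp add: unitAb_def lift_etaZ)
qed

end

theorem mainTheorem8: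
  fixes X :: "'a stcx" and A :: "'b sab"
  assumes "sTcomplex X" and "sAbGrp A"
  shows "sAbGrp (AbST X) \<and> sTmap X (UsT (AbST X)) (unitAb X) \<and>
    (\<forall>f. sTmap X (UsT A) f \<longrightarrow>
      (\<exists>g. sAbhom (AbST X) A g \<and> (\<forall>n. \<forall>x \<in> sS X n. g n (unitAb X n x) = f n x) \<and>
         (\<forall>g'. sAbhom (AbST X) A g' \<and> (\<forall>n. \<forall>x \<in> sS X n. g' n (unitAb X n x) = f n x)
            \<longrightarrow> (\<forall>n. \<forall>y \<in> sS (AbST X) n. g' n y = g n y))))"
proof (intro conjI allI impI)
  interpret sT_complex X by (rule sT_complex.intro) fact
  show "sAbGrp (AbST X)" by (rule AbST_sAbGrp)
  show "sTmap X (UsT (AbST X)) (unitAb X)" by (rule unitAb_sTmap)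
  fix f assume "sTmap X (UsT A) f"
  then interpret sTmap_to_UsT X A f
    using assms by (intro sTmap_to_UsT.intro sTmap_to_UsT_axioms.intro sT_complex.intro simplicial_ab_group.intro)
  obtain g where g: "sAbhom (AbST X) A g" "\<And>n c. c \<in> zcarrier X n \<Longrightarrow> g n (zclass n c) = lift n c"
    using induced_hom_exists by blast
  show "\<exists>g. sAbhom (AbST X) A g \<and> (\<forall>n. \<forall>x \<in> sS X n. g n (unitAb X n x) = f n x) \<and>
      (\<forall>g'. sAbhom (AbST X) A g' \<and> (\<forall>n. \<forall>x \<in> sS X n. g' n (unitAb X n x) = f n x)
        \<longrightarrow> (\<forall>n. \<forall>y \<in> sS (AbST X) n. g' n y = g n y))"
  proof (intro exI[of _ g] conjI allI impI ballI)
    show "sAbhom (AbST X) A g" by (rule g(1))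
    show "g n (unitAb X n x) = f n x" if "x \<in> sS X n" for n x
      using that g(2) by (simp add: unitAb_def zcarrier_etaZ lift_etaZ)
    fix g' n y
    assume g': "sAbhom (AbST X) A g' \<and> (\<forall>n. \<forall>x \<in> sS X n. g' n (unitAb X n x) = f n x)"
      and "y \<in> sS (AbST X) n"
    then obtain c where "c \<in> zcarrier X n" "y = zclass n c"
      by (auto simp: sS_AbST)
    then show "g' n y = g n y"
      using induced_hom_unique g' g(2) by simp
  qed
qed

end
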